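(* Let $\mathcal{H}$ be a complex Hilbert space and let $A\in\mathcal{B}(\mathcal{H})$ be a positive operator with $\dim R(A)\ge 2$. Let $T\in\mathcal{B}_A(\mathcal{H})$ and $q\in\mathbb{C}$ with $|q|\le 1$, and suppose that $w_{q,A}^2(T)=\frac{|q|^2}{4}\|T^{\sharp_A}T+TT^{\sharp_A}\|_A$. Then for all $\theta\in\mathbb{R}$, \[ |q|^2\|\Re_A(e^{i\theta}T)\|_A^2=|q|^2\|\Im_A(e^{i\theta}T)\|_A^2=\frac{|q|^2}{4}\|T^{\sharp_A}T+TT^{\sharp_A}\|_A . \]
   Context: $A$ induces the semi-inner product $\langle x,y\rangle_A=\langle Ax,y\rangle$ and seminorm $\|x\|_A=\sqrt{\langle x,x\rangle_A}$. For an operator $S$, $\|S\|_A=\sup\{\|Sx\|_A/\|x\|_A : x\in\overline{R(A)},\,x\neq 0\}$. $\mathcal{B}_A(\mathcal{H})$ is the set of operators $T$ admitting an $A$-adjoint (an operator $W$ with $\langle Tx,y\rangle_A=\langle x,Wy\rangle_A$ for all $x,y$), and $T^{\sharp_A}$ denotes the unique solution $X$ of $AX=T^*A$ with $R(X)\subseteq\overline{R(A)}$. $\Re_A(T)=\frac{T+T^{\sharp_A}}{2}$ and $\Im_A(T)=\frac{T-T^{\sharp_A}}{2i}$. The $A$-$q$-numerical radius is $w_{q,A}(T)=\sup\{|\langle Tx,y\rangle_A| : \|x\|_A=\|y\|_A=1,\ \langle x,y\rangle_A=q\}$. *)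

theory Defs
  imports "HOL-Analysis.Analysis"
begin

text \<open>Complex Hilbert spaces (inner product linear in the first argument,
conjugate-linear in the second), as an axiomatic type class, since the
distribution has no complex inner-product-space class.\<close>

class complex_hilbert = ab_group_add +
  fixes hscale :: "complex \<Rightarrow> 'a \<Rightarrow> 'a"
    and hinner :: "'a \<Rightarrow> 'a \<Rightarrow> complex"
  assumes hscale_add_right: "hscale a (x + y) = hscale a x + hscale a y"
    and hscale_add_left: "hscale (a + b) x = hscale a x + hscale b x"
    and hscale_hscale: "hscale a (hscale b x) = hscale (a * b) x"
    and hscale_one: "hscale 1 x = x"
    and hinner_add_left: "hinner (x + y) z = hinner x z + hinner y z"
    and hinner_scale_left: "hinner (hscale a x) y = a * hinner x y"
    and hinner_commute: "hinner y x = cnj (hinner x y)"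
    and hinner_ge_zero: "0 \<le> Re (hinner x x)"
    and hinner_eq_zero: "hinner x x = 0 \<longleftrightarrow> x = 0"
    and hcomplete: "(\<forall>e>0. \<exists>N. \<forall>m\<ge>N. \<forall>n\<ge>N. sqrt (Re (hinner (X m - X n) (X m - X n))) < e)
        \<Longrightarrow> \<exists>L. (\<lambda>n. sqrt (Re (hinner (X n - L) (X n - L)))) \<longlonglongrightarrow> 0"

definition hnorm :: "'a::complex_hilbert \<Rightarrow> real" where
  "hnorm x = sqrt (Re (hinner x x))"

definition hclosure :: "'a::complex_hilbert set \<Rightarrow> 'a set" where
  "hclosure S = {x. \<forall>e>0. \<exists>y\<in>S. hnorm (x - y) < e}"

definition bounded_op :: "('a::complex_hilbert \<Rightarrow> 'a) \<Rightarrow> bool" where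
  "bounded_op T \<longleftrightarrow> (\<forall>x y. T (x + y) = T x + T y) \<and> (\<forall>a x. T (hscale a x) = hscale a (T x))
     \<and> (\<exists>K. \<forall>x. hnorm (T x) \<le> K * hnorm x)"

definition hadj :: "('a::complex_hilbert \<Rightarrow> 'a) \<Rightarrow> ('a \<Rightarrow> 'a)" where
  "hadj T = (THE S. bounded_op S \<and> (\<forall>x y. hinner (T x) y = hinner x (S y)))"

definition positive_op :: "('a::complex_hilbert \<Rightarrow> 'a) \<Rightarrow> bool" where
  "positive_op A \<longleftrightarrow> bounded_op A \<and> (\<forall>x. Im (hinner (A x) x) = 0 \<and> 0 \<le> Re (hinner (A x) x))"

text \<open>dim R(A) >= 2: the range contains two linearly independent vectors.\<close>
definition range_dim_ge_2 :: "('a::complex_hilbert \<Rightarrow> 'a) \<Rightarrow> bool" where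
  "range_dim_ge_2 A \<longleftrightarrow> (\<exists>u\<in>range A. \<exists>v\<in>range A.
      \<forall>a b. hscale a u + hscale b v = 0 \<longrightarrow> a = 0 \<and> b = 0)"

definition inner_A :: "('a::complex_hilbert \<Rightarrow> 'a) \<Rightarrow> 'a \<Rightarrow> 'a \<Rightarrow> complex" where
  "inner_A A x y = hinner (A x) y"

definition norm_A :: "('a::complex_hilbert \<Rightarrow> 'a) \<Rightarrow> 'a \<Rightarrow> real" where
  "norm_A A x = sqrt (Re (inner_A A x x))"

definition opnorm_A :: "('a::complex_hilbert \<Rightarrow> 'a) \<Rightarrow> ('a \<Rightarrow> 'a) \<Rightarrow> real" where
  "opnorm_A A S = Sup {norm_A A (S x) / norm_A A x | x. x \<in> hclosure (range A) \<and> x \<noteq> 0}"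

definition BA :: "('a::complex_hilbert \<Rightarrow> 'a) \<Rightarrow> ('a \<Rightarrow> 'a) set" where
  "BA A = {T. bounded_op T \<and> (\<exists>W. bounded_op W \<and> (\<forall>x y. inner_A A (T x) y = inner_A A x (W y)))}"

definition sharpA :: "('a::complex_hilbert \<Rightarrow> 'a) \<Rightarrow> ('a \<Rightarrow> 'a) \<Rightarrow> ('a \<Rightarrow> 'a)" where
  "sharpA A T = (THE X. bounded_op X \<and> A \<circ> X = hadj T \<circ> A \<and> range X \<subseteq> hclosure (range A))"

definition ReA :: "('a::complex_hilbert \<Rightarrow> 'a) \<Rightarrow> ('a \<Rightarrow> 'a) \<Rightarrow> ('a \<Rightarrow> 'a)" where
  "ReA A T = (\<lambda>x. hscale (1/2) (T x + sharpA A T x))"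

definition ImA :: "('a::complex_hilbert \<Rightarrow> 'a) \<Rightarrow> ('a \<Rightarrow> 'a) \<Rightarrow> ('a \<Rightarrow> 'a)" where
  "ImA A T = (\<lambda>x. hscale (1 / (2 * \<i>)) (T x - sharpA A T x))"

definition wqA :: "complex \<Rightarrow> ('a::complex_hilbert \<Rightarrow> 'a) \<Rightarrow> ('a \<Rightarrow> 'a) \<Rightarrow> real" where
  "wqA q A T = Sup {cmod (inner_A A (T x) y) | x y.
      norm_A A x = 1 \<and> norm_A A y = 1 \<and> inner_A A x y = q}"

end

theory Submission
  imports Defs
begin

text \<open>Let \<open>q \<noteq> 0\<close> (for \<open>q = 0\<close> there is nothing to prove), \<open>S = e\<^sup>i\<^sup>\<theta> T\<close> and
  \<open>w = w\<^sub>q\<^sub>,\<^sub>A(T) / |q|\<close>. Using \<open>dim R(A) \<ge> 2\<close>, every A-unit vector \<open>x\<close> has two partners \<open>y\<close>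
  with \<open>\<langle>x, y\<rangle>\<^sub>A = q\<close> whose values \<open>\<langle>T x, y\<rangle>\<^sub>A\<close> average to \<open>q \<langle>T x, x\<rangle>\<^sub>A\<close>, so
  \<open>|q| |\<langle>T x, x\<rangle>\<^sub>A| \<le> w\<^sub>q\<^sub>,\<^sub>A(T)\<close>. Hence the A-numerical ranges of \<open>S\<close> and of its A-selfadjoint
  parts \<open>Re\<^sub>A S\<close>, \<open>Im\<^sub>A S\<close> are bounded by \<open>w\<close>, and by polarization
  \<open>\<parallel>Re\<^sub>A S\<parallel>\<^sub>A, \<parallel>Im\<^sub>A S\<parallel>\<^sub>A \<le> w\<close>. On the other hand
  \<open>(Re\<^sub>A S)\<^sup>2 + (Im\<^sub>A S)\<^sup>2 = (T\<^sup>\<sharp>T + TT\<^sup>\<sharp>) / 2\<close>, so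
  \<open>\<parallel>T\<^sup>\<sharp>T + TT\<^sup>\<sharp>\<parallel>\<^sub>A \<le> 2 (\<parallel>Re\<^sub>A S\<parallel>\<^sub>A\<^sup>2 + \<parallel>Im\<^sub>A S\<parallel>\<^sub>A\<^sup>2)\<close>, and the hypothesis
  \<open>4 w\<^sup>2 = \<parallel>T\<^sup>\<sharp>T + TT\<^sup>\<sharp>\<parallel>\<^sub>A\<close> forces both norms to equal \<open>w\<close>.

  Since \<open>T\<^sup>*\<close> and \<open>T\<^sup>\<sharp>\<close> are defined as unique solutions of operator equations and
  \<open>w\<^sub>q\<^sub>,\<^sub>A\<close> as a supremum, the argument also rests on the projection theorem (existence of
  adjoints and of \<open>T\<^sup>\<sharp>\<close>) and on the A-boundedness of operators in \<open>B\<^sub>A(H)\<close>, obtained by a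
  \<open>2\<^sup>n\<close>-th power trick.\<close>

section \<open>Hilbert space algebra and bounded operators\<close>

lemma hscale_zero_left [simp]: "hscale 0 x = (0::'a::complex_hilbert)"
  using hscale_add_left[of 0 0 x] by simp

lemma hscale_zero_right [simp]: "hscale a (0::'a::complex_hilbert) = 0"
  using hscale_add_right[of a 0 0] by simp

lemma hscale_minus_left: "hscale (- a) x = - hscale a (x::'a::complex_hilbert)"
  using hscale_add_left[of "-a" a x] by (simp add: eq_neg_iff_add_eq_0)

lemma hscale_minus_right: "hscale a (- x) = - hscale a (x::'a::complex_hilbert)"
  using hscale_add_right[of a "-x" x] by (simp add: eq_neg_iff_add_eq_0)

lemma hscale_diff_right: "hscale a (x - y) = hscale a x - hscale a (y::'a::complex_hilbert)"
  using hscale_add_right[of a x "-y"] by (simp add: hscale_minus_right)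

lemma hscale_minus_one [simp]: "hscale (-1) x = - (x::'a::complex_hilbert)"
  by (simp add: hscale_minus_left hscale_one)

lemma hinner_zero_left [simp]: "hinner 0 (y::'a::complex_hilbert) = 0"
  using hinner_add_left[of 0 0 y] by simp

lemma hinner_zero_right [simp]: "hinner (y::'a::complex_hilbert) 0 = 0"
  using hinner_commute[of 0 y] by simp

lemma hinner_add_right: "hinner x (y + z) = hinner x y + hinner x (z::'a::complex_hilbert)"
  by (metis complex_cnj_add hinner_add_left hinner_commute)

lemma hinner_scale_right: "hinner x (hscale a y) = cnj a * hinner x (y::'a::complex_hilbert)"
  by (metis complex_cnj_mult hinner_commute hinner_scale_left)

lemma hinner_minus_left: "hinner (- x) y = - hinner x (y::'a::complex_hilbert)"
  using hinner_scale_left[of "-1" x y] by simp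

lemma hinner_minus_right: "hinner x (- y) = - hinner x (y::'a::complex_hilbert)"
  using hinner_scale_right[of x "-1" y] by simp

lemma hinner_diff_left: "hinner (x - y) z = hinner x z - hinner y (z::'a::complex_hilbert)"
  using hinner_add_left[of x "-y" z] by (simp add: hinner_minus_left)

lemma hinner_diff_right: "hinner x (y - z) = hinner x y - hinner x (z::'a::complex_hilbert)"
  using hinner_add_right[of x y "-z"] by (simp add: hinner_minus_right)

lemmas hinner_simps = hinner_add_left hinner_add_right hinner_diff_left hinner_diff_right
  hinner_minus_left hinner_minus_right hinner_scale_left hinner_scale_right

lemma hinner_ext: "(\<And>z. hinner z x = hinner z (y::'a::complex_hilbert)) \<Longrightarrow> x = y"
  using hinner_eq_zero[of "x - y"] by (simp add: hinner_diff_right)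

lemma bounded_op_add: "bounded_op T \<Longrightarrow> T (x + y) = T x + T y"
  unfolding bounded_op_def by blast

lemma bounded_op_hscale: "bounded_op T \<Longrightarrow> T (hscale a x) = hscale a (T x)"
  unfolding bounded_op_def by blast

lemma bounded_op_zero [simp]: "bounded_op T \<Longrightarrow> T 0 = 0"
  using bounded_op_hscale[of T 0 0] by simp

lemma bounded_op_minus: "bounded_op T \<Longrightarrow> T (- x) = - T x"
  using bounded_op_hscale[of T "-1" x] by simp

lemma bounded_op_diff: "bounded_op T \<Longrightarrow> T (x - y) = T x - T y"
  using bounded_op_add[of T x "-y"] bounded_op_minus[of T y] by simp

lemma hnorm_nonneg [simp]: "0 \<le> hnorm x"
  unfolding hnorm_def by (simp add: hinner_ge_zero)

lemma bounded_op_bound: "bounded_op T \<Longrightarrow> \<exists>K>0. \<forall>x. hnorm (T x) \<le> K * hnorm x"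
proof -
  assume "bounded_op T"
  then obtain K where "\<forall>x. hnorm (T x) \<le> K * hnorm x" unfolding bounded_op_def by blast
  then have "\<forall>x. hnorm (T x) \<le> max K 1 * hnorm x"
    by (meson hnorm_nonneg max.cobounded1 mult_right_mono order_trans)
  then show ?thesis by (intro exI[of _ "max K 1"]) auto
qed

lemma bounded_op_ident: "bounded_op (\<lambda>x. x)"
  unfolding bounded_op_def by (auto intro: exI[of _ 1])

lemma bounded_op_compose: "bounded_op S \<Longrightarrow> bounded_op T \<Longrightarrow> bounded_op (\<lambda>x. S (T x))"
proof -
  assume S: "bounded_op S" and T: "bounded_op T"
  obtain K1 where K1: "K1 > 0" "\<forall>x. hnorm (S x) \<le> K1 * hnorm x" using bounded_op_bound[OF S] by blast
  obtain K2 where K2: "\<forall>x. hnorm (T x) \<le> K2 * hnorm x" using bounded_op_bound[OF T] by blast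
  have "hnorm (S (T x)) \<le> (K1 * K2) * hnorm x" for x
    using K1 K2 order_trans[OF spec[OF K1(2), of "T x"] mult_left_mono[OF spec[OF K2, of x]]]
    by (simp add: mult.assoc)
  then show ?thesis using S T unfolding bounded_op_def by auto
qed

section \<open>Positive operators and the A-seminorm\<close>

lemma positive_op_bounded: "positive_op A \<Longrightarrow> bounded_op A"
  unfolding positive_op_def by blast

lemma positive_op_Im_zero: "positive_op A \<Longrightarrow> Im (hinner (A x) x) = 0"
  unfolding positive_op_def by blast

lemma positive_op_Re_nonneg: "positive_op A \<Longrightarrow> 0 \<le> Re (hinner (A x) x)"
  unfolding positive_op_def by blast

text \<open>A real quadratic form is Hermitian: polarize \<open>Im \<langle>A z, z\<rangle> = 0\<close> at \<open>z = x + y\<close>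
  and \<open>z = x + \<i> y\<close>.\<close>
lemma positive_op_hinner_commute:
  assumes A: "positive_op A"
  shows "hinner (A y) x = cnj (hinner (A x) y)"
proof -
  have b: "bounded_op A" using positive_op_bounded[OF A] .
  define a where "a = hinner (A x) y"
  define c where "c = hinner (A y) x"
  have "Im (hinner (A (x + y)) (x + y)) = 0" using positive_op_Im_zero[OF A] .
  then have "Im (hinner (A x) x + a + c + hinner (A y) y) = 0"
    by (simp add: bounded_op_add[OF b] hinner_simps a_def c_def algebra_simps)
  then have 1: "Im a + Im c = 0" using positive_op_Im_zero[OF A, of x] positive_op_Im_zero[OF A, of y] by simp
  have "Im (hinner (A (x + hscale \<i> y)) (x + hscale \<i> y)) = 0" using positive_op_Im_zero[OF A] .
  then have "Im (hinner (A x) x - \<i> * a + \<i> * c + hinner (A y) y) = 0"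
    by (simp add: bounded_op_add[OF b] bounded_op_hscale[OF b] hinner_simps a_def c_def algebra_simps)
  then have 2: "- Re a + Re c = 0" using positive_op_Im_zero[OF A, of x] positive_op_Im_zero[OF A, of y] by simp
  show ?thesis using 1 2 unfolding a_def[symmetric] c_def[symmetric] by (simp add: complex_eq_iff)
qed

lemma positive_op_selfadjoint: "positive_op A \<Longrightarrow> hinner x (A y) = hinner (A x) y"
  by (metis complex_cnj_cnj hinner_commute positive_op_hinner_commute)

lemma cmod_sq_le_of_quadratic_nonneg:
  fixes b :: complex and X c :: real
  assumes h: "\<And>t::complex. 0 \<le> X - 2 * Re (cnj t * b) + (cmod t)\<^sup>2 * c"
    and c: "0 \<le> c"
  shows "(cmod b)\<^sup>2 \<le> X * c"
proof (cases "c = 0")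
  case True
  show ?thesis
  proof (rule ccontr)
    assume "\<not> ?thesis"
    then have bz: "(cmod b)\<^sup>2 > 0" using True by simp
    define s where "s = (\<bar>X\<bar> + 1) / (2 * (cmod b)\<^sup>2)"
    have "cnj (complex_of_real s * b) * b = of_real s * (b * cnj b)" by simp
    then have "Re (cnj (complex_of_real s * b) * b) = s * (cmod b)\<^sup>2"
      by (simp only: complex_norm_square[symmetric]) simp
    then have "0 \<le> X - 2 * (s * (cmod b)\<^sup>2)" using h[of "of_real s * b"] True by simp
    also have "2 * (s * (cmod b)\<^sup>2) = \<bar>X\<bar> + 1" unfolding s_def using bz by simp
    finally show False by linarith
  qed
next
  case False
  then have cp: "c > 0" using c by simp
  define t where "t = b / of_real c"
  have "Re (cnj t * b) = (cmod b)\<^sup>2 / c"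
    unfolding t_def using cmod_power2[of b] by (simp add: power2_eq_square field_simps)
  moreover have "(cmod t)\<^sup>2 * c = (cmod b)\<^sup>2 / c"
    unfolding t_def using cp by (simp add: norm_divide power_divide power2_eq_square)
  ultimately have "(cmod b)\<^sup>2 / c \<le> X" using h[of t] by simp
  then show ?thesis using cp by (simp add: divide_le_eq mult.commute)
qed

lemma positive_op_Re_expand:
  assumes A: "positive_op A"
  shows "Re (hinner (A (x - hscale t y)) (x - hscale t y)) =
     Re (hinner (A x) x) - 2 * Re (cnj t * hinner (A x) y) + (cmod t)\<^sup>2 * Re (hinner (A y) y)"
proof -
  have b: "bounded_op A" using positive_op_bounded[OF A] .
  have e: "hinner (A (x - hscale t y)) (x - hscale t y) =
     hinner (A x) x - cnj t * hinner (A x) y - t * cnj (hinner (A x) y) + t * cnj t * hinner (A y) y"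
    by (simp add: bounded_op_diff[OF b] bounded_op_hscale[OF b] hinner_simps algebra_simps
        positive_op_hinner_commute[OF A, of y x])
  have "Re (t * cnj t * hinner (A y) y) = (cmod t)\<^sup>2 * Re (hinner (A y) y)"
    using positive_op_Im_zero[OF A, of y] by (simp add: complex_mult_cnj cmod_power2)
  then show ?thesis unfolding e by simp
qed

lemma positive_op_Cauchy_Schwarz:
  assumes A: "positive_op A"
  shows "(cmod (hinner (A x) y))\<^sup>2 \<le> Re (hinner (A x) x) * Re (hinner (A y) y)"
  by (rule cmod_sq_le_of_quadratic_nonneg)
    (use positive_op_Re_expand[OF A, of x _ y, symmetric] positive_op_Re_nonneg[OF A] in auto)

lemma norm_A_nonneg [simp]: "positive_op A \<Longrightarrow> 0 \<le> norm_A A x"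
  unfolding norm_A_def inner_A_def by (simp add: positive_op_Re_nonneg)

lemma power2_norm_A: "positive_op A \<Longrightarrow> (norm_A A x)\<^sup>2 = Re (hinner (A x) x)"
  unfolding norm_A_def inner_A_def using positive_op_Re_nonneg by auto

lemma inner_A_self: "positive_op A \<Longrightarrow> inner_A A x x = of_real ((norm_A A x)\<^sup>2)"
  by (simp add: power2_norm_A inner_A_def complex_eq_iff positive_op_Im_zero)

lemma inner_A_Cauchy_Schwarz:
  assumes A: "positive_op A"
  shows "cmod (inner_A A x y) \<le> norm_A A x * norm_A A y"
proof -
  have "(cmod (inner_A A x y))\<^sup>2 \<le> (norm_A A x * norm_A A y)\<^sup>2"
    using positive_op_Cauchy_Schwarz[OF A, of x y]
    by (simp add: power2_norm_A[OF A] power_mult_distrib inner_A_def)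
  then show ?thesis by (rule power2_le_imp_le) (simp add: A)
qed

lemma norm_A_triangle:
  assumes A: "positive_op A"
  shows "norm_A A (x + y) \<le> norm_A A x + norm_A A y"
proof -
  have e: "hinner (A (x + y)) (x + y) = hinner (A x) x + hinner (A x) y + cnj (hinner (A x) y) + hinner (A y) y"
    by (simp add: bounded_op_add[OF positive_op_bounded[OF A]] hinner_simps
        positive_op_hinner_commute[OF A, of y x])
  have "Re (hinner (A x) y) \<le> norm_A A x * norm_A A y"
    using complex_Re_le_cmod inner_A_Cauchy_Schwarz[OF A] unfolding inner_A_def by (rule order_trans)
  then have "(norm_A A (x + y))\<^sup>2 \<le> (norm_A A x + norm_A A y)\<^sup>2"
    by (simp add: power2_norm_A[OF A] e power2_sum)
  then show ?thesis by (rule power2_le_imp_le) (simp add: A)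
qed

lemma norm_A_hscale:
  assumes A: "positive_op A"
  shows "norm_A A (hscale c x) = cmod c * norm_A A x"
proof -
  have "hinner (A (hscale c x)) (hscale c x) = (c * cnj c) * hinner (A x) x"
    by (simp add: bounded_op_hscale[OF positive_op_bounded[OF A]] hinner_simps)
  then have "(norm_A A (hscale c x))\<^sup>2 = (cmod c * norm_A A x)\<^sup>2"
    using positive_op_Im_zero[OF A, of x]
    by (simp add: power2_norm_A[OF A] complex_mult_cnj power_mult_distrib cmod_power2)
  then show ?thesis by (simp add: power2_eq_iff_nonneg A)
qed

lemma norm_A_minus: "positive_op A \<Longrightarrow> norm_A A (- x) = norm_A A x"
  using norm_A_hscale[of A "-1" x] by simp

lemma norm_A_diff_triangle: "positive_op A \<Longrightarrow> norm_A A (x - y) \<le> norm_A A x + norm_A A y"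
  using norm_A_triangle[of A x "-y"] norm_A_minus[of A y] by simp

lemma norm_A_of_null: "A y = 0 \<Longrightarrow> norm_A A y = 0"
  unfolding norm_A_def inner_A_def by simp

lemma norm_A_zero [simp]: "positive_op A \<Longrightarrow> norm_A A 0 = 0"
  by (simp add: norm_A_of_null positive_op_bounded)

lemma null_of_norm_A:
  assumes A: "positive_op A" and "norm_A A u = 0"
  shows "A u = 0"
proof -
  have "Re (hinner (A u) u) = 0" using power2_norm_A[OF A, of u] assms(2) by simp
  then have "(cmod (hinner (A u) (A u)))\<^sup>2 \<le> 0"
    using positive_op_Cauchy_Schwarz[OF A, of u "A u"] by simp
  then show ?thesis using hinner_eq_zero[of "A u"] by simp
qed

lemma inner_A_add_left: "positive_op A \<Longrightarrow> inner_A A (x + y) z = inner_A A x z + inner_A A y z"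
  unfolding inner_A_def by (simp add: bounded_op_add[OF positive_op_bounded] hinner_simps)

lemma inner_A_add_right: "inner_A A z (x + y) = inner_A A z x + inner_A A z y"
  unfolding inner_A_def by (simp add: hinner_simps)

lemma inner_A_diff_left: "positive_op A \<Longrightarrow> inner_A A (x - y) z = inner_A A x z - inner_A A y z"
  unfolding inner_A_def by (simp add: bounded_op_diff[OF positive_op_bounded] hinner_simps)

lemma inner_A_diff_right: "inner_A A z (x - y) = inner_A A z x - inner_A A z y"
  unfolding inner_A_def by (simp add: hinner_simps)

lemma inner_A_hscale_left: "positive_op A \<Longrightarrow> inner_A A (hscale a x) z = a * inner_A A x z"
  unfolding inner_A_def by (simp add: bounded_op_hscale[OF positive_op_bounded] hinner_simps)

lemma inner_A_hscale_right: "inner_A A z (hscale a x) = cnj a * inner_A A z x"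
  unfolding inner_A_def by (simp add: hinner_simps)

lemma inner_A_commute: "positive_op A \<Longrightarrow> inner_A A y x = cnj (inner_A A x y)"
  unfolding inner_A_def by (rule positive_op_hinner_commute)

lemmas inner_A_left_simps = inner_A_add_left inner_A_diff_left inner_A_hscale_left
lemmas inner_A_right_simps = inner_A_add_right inner_A_diff_right inner_A_hscale_right

lemma norm_A_parallelogram:
  assumes A: "positive_op A"
  shows "(norm_A A (x + y))\<^sup>2 + (norm_A A (x - y))\<^sup>2 = 2 * (norm_A A x)\<^sup>2 + 2 * (norm_A A y)\<^sup>2"
proof -
  have "inner_A A (x + y) (x + y) + inner_A A (x - y) (x - y) = 2 * inner_A A x x + 2 * inner_A A y y"
    by (simp add: inner_A_left_simps[OF A] inner_A_right_simps algebra_simps)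
  from arg_cong[where f=Re, OF this] show ?thesis by (simp add: inner_A_self[OF A])
qed

text \<open>The Hilbert-norm facts are the case \<open>A = id\<close> of the A-seminorm facts.\<close>
lemma positive_op_ident: "positive_op (\<lambda>x. x)"
  unfolding positive_op_def using bounded_op_ident hinner_ge_zero hinner_commute
  by (metis Im_complex_of_real cnj.simps(2) complex_cnj_cnj neg_equal_zero)

lemma norm_A_ident: "norm_A (\<lambda>x. x) x = hnorm x"
  unfolding norm_A_def hnorm_def inner_A_def by simp

lemma power2_hnorm: "(hnorm x)\<^sup>2 = Re (hinner x x)"
  using power2_norm_A[OF positive_op_ident] by (simp add: norm_A_ident)

lemma hnorm_triangle: "hnorm (x + y) \<le> hnorm x + hnorm y"
  using norm_A_triangle[OF positive_op_ident] by (simp add: norm_A_ident)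

lemma hnorm_hscale: "hnorm (hscale c x) = cmod c * hnorm x"
  using norm_A_hscale[OF positive_op_ident] by (simp add: norm_A_ident)

lemma hnorm_Cauchy_Schwarz: "cmod (hinner x y) \<le> hnorm x * hnorm y"
  using inner_A_Cauchy_Schwarz[OF positive_op_ident] by (simp add: norm_A_ident inner_A_def)

lemma hnorm_commute: "hnorm (x - y) = hnorm (y - x)"
  by (metis norm_A_ident norm_A_minus positive_op_ident minus_diff_eq)

lemma hnorm_eq_zero_iff [simp]: "hnorm x = 0 \<longleftrightarrow> x = 0"
  using null_of_norm_A[OF positive_op_ident] norm_A_of_null[of "\<lambda>x. x"]
  by (auto simp: norm_A_ident)

lemma hnorm_zero [simp]: "hnorm 0 = 0"
  by simp

lemma hnorm_pos_iff [simp]: "0 < hnorm x \<longleftrightarrow> x \<noteq> 0"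
  using hnorm_nonneg[of x] hnorm_eq_zero_iff[of x] by linarith

lemma hnorm_sq_expand:
  "(hnorm (x - hscale t y))\<^sup>2 = (hnorm x)\<^sup>2 - 2 * Re (cnj t * hinner x y) + (cmod t)\<^sup>2 * (hnorm y)\<^sup>2"
  using positive_op_Re_expand[OF positive_op_ident, of x t y] by (simp add: power2_hnorm)

lemma bounded_op_hscale_op: "bounded_op T \<Longrightarrow> bounded_op (\<lambda>x. hscale c (T x))"
proof -
  have "bounded_op (hscale c :: 'a \<Rightarrow> 'a)"
    unfolding bounded_op_def
    by (intro conjI allI exI[of _ "cmod c"]) (simp_all add: hscale_add_right hscale_hscale mult.commute hnorm_hscale)
  then show "bounded_op T \<Longrightarrow> bounded_op (\<lambda>x. hscale c (T x))" using bounded_op_compose by blast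
qed

lemma bounded_op_add_op: "bounded_op X \<Longrightarrow> bounded_op Y \<Longrightarrow> bounded_op (\<lambda>x. X x + Y x)"
proof -
  assume X: "bounded_op X" and Y: "bounded_op Y"
  obtain K1 where K1: "\<forall>x. hnorm (X x) \<le> K1 * hnorm x" using bounded_op_bound[OF X] by blast
  obtain K2 where K2: "\<forall>x. hnorm (Y x) \<le> K2 * hnorm x" using bounded_op_bound[OF Y] by blast
  have "hnorm (X x + Y x) \<le> (K1 + K2) * hnorm x" for x
    using hnorm_triangle[of "X x" "Y x"] K1 K2 by (simp add: distrib_right add_mono order_trans)
  then show ?thesis unfolding bounded_op_def
    using bounded_op_add[OF X] bounded_op_add[OF Y] bounded_op_hscale[OF X] bounded_op_hscale[OF Y]
    by (intro conjI allI exI[of _ "K1 + K2"]) (simp_all add: hscale_add_right algebra_simps)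
qed

lemma bounded_op_diff_op: "bounded_op X \<Longrightarrow> bounded_op Y \<Longrightarrow> bounded_op (\<lambda>x. X x - Y x)"
  using bounded_op_add_op[of X "\<lambda>x. hscale (-1) (Y x)"] bounded_op_hscale_op[of Y "-1"] by simp

section \<open>The projection theorem\<close>

definition closed_hsubspace :: "'a::complex_hilbert set \<Rightarrow> bool" where
  "closed_hsubspace M \<longleftrightarrow> 0 \<in> M \<and> (\<forall>x\<in>M. \<forall>y\<in>M. x + y \<in> M) \<and> (\<forall>a. \<forall>x\<in>M. hscale a x \<in> M)
     \<and> hclosure M \<subseteq> M"

lemma closed_hsubspace_zero: "closed_hsubspace M \<Longrightarrow> 0 \<in> M"
  unfolding closed_hsubspace_def by blast

lemma closed_hsubspace_add: "closed_hsubspace M \<Longrightarrow> x \<in> M \<Longrightarrow> y \<in> M \<Longrightarrow> x + y \<in> M"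
  unfolding closed_hsubspace_def by blast

lemma closed_hsubspace_hscale: "closed_hsubspace M \<Longrightarrow> x \<in> M \<Longrightarrow> hscale a x \<in> M"
  unfolding closed_hsubspace_def by blast

lemma closed_hsubspace_diff: "closed_hsubspace M \<Longrightarrow> x \<in> M \<Longrightarrow> y \<in> M \<Longrightarrow> x - y \<in> M"
  using closed_hsubspace_add[of M x "hscale (-1) y"] closed_hsubspace_hscale[of M y "-1"] by simp

lemma closed_hsubspace_closed: "closed_hsubspace M \<Longrightarrow> x \<in> hclosure M \<Longrightarrow> x \<in> M"
  unfolding closed_hsubspace_def by blast

lemma hnorm_parallelogram:
  "(hnorm (u + v))\<^sup>2 + (hnorm (u - v))\<^sup>2 = 2 * (hnorm u)\<^sup>2 + 2 * (hnorm v)\<^sup>2"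
proof -
  have "hinner (u + v) (u + v) + hinner (u - v) (u - v) = 2 * hinner u u + 2 * hinner v v"
    by (simp add: hinner_simps algebra_simps)
  from arg_cong[where f=Re, OF this] show ?thesis by (simp add: power2_hnorm)
qed

text \<open>Apply the parallelogram law to \<open>x - m\<close> and \<open>x - m'\<close>; the midpoint of \<open>m\<close> and \<open>m'\<close>
  lies in \<open>M\<close>, hence at distance at least \<open>d\<close> from \<open>x\<close>.\<close>
lemma closed_hsubspace_parallelogram_bound:
  assumes M: "closed_hsubspace M" and m: "m \<in> M" "m' \<in> M"
    and d: "0 \<le> d" "\<And>z. z \<in> M \<Longrightarrow> d \<le> hnorm (x - z)"
  shows "(hnorm (m - m'))\<^sup>2 \<le> 2 * (hnorm (x - m))\<^sup>2 + 2 * (hnorm (x - m'))\<^sup>2 - 4 * d\<^sup>2"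
proof -
  have mid: "hscale (1/2) (m + m') \<in> M" using m M by (simp add: closed_hsubspace_add closed_hsubspace_hscale)
  have "hscale 2 (x - hscale (1/2) (m + m')) = hscale 2 x - (m + m')"
    by (simp add: hscale_diff_right hscale_hscale hscale_one)
  also have "hscale 2 x = x + x" using hscale_add_left[of 1 1 x] by (simp add: hscale_one)
  finally have "(x - m) + (x - m') = hscale 2 (x - hscale (1/2) (m + m'))" by (simp add: algebra_simps)
  then have "hnorm ((x - m) + (x - m')) \<ge> 2 * d" using d(2)[OF mid] by (simp add: hnorm_hscale)
  then have "(hnorm ((x - m) + (x - m')))\<^sup>2 \<ge> 4 * d\<^sup>2"
    using d(1) power_mono[of "2 * d" _ 2] by (simp add: power_mult_distrib)
  moreover have "(hnorm (m - m'))\<^sup>2 = 2 * (hnorm (x - m))\<^sup>2 + 2 * (hnorm (x - m'))\<^sup>2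
      - (hnorm ((x - m) + (x - m')))\<^sup>2"
    using hnorm_parallelogram[of "x - m" "x - m'"] hnorm_commute[of m m'] by simp
  ultimately show ?thesis by simp
qed

lemma closed_hsubspace_Cauchy_limit:
  assumes M: "closed_hsubspace M" and f: "\<And>n. f n \<in> M"
    and Cauchy: "\<And>e. e > 0 \<Longrightarrow> \<exists>N. \<forall>m\<ge>N. \<forall>n\<ge>N. hnorm (f m - f n) < e"
  shows "\<exists>L\<in>M. (\<lambda>n. hnorm (f n - L)) \<longlonglongrightarrow> 0"
proof -
  obtain L where L: "(\<lambda>n. hnorm (f n - L)) \<longlonglongrightarrow> 0"
    using hcomplete[of f] Cauchy unfolding hnorm_def by blast
  have "L \<in> hclosure M" unfolding hclosure_def
  proof (intro CollectI allI impI)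
    fix e :: real assume "e > 0"
    then obtain n where "hnorm (f n - L) < e" using L unfolding LIMSEQ_def dist_real_def by auto
    then show "\<exists>y\<in>M. hnorm (L - y) < e" using f hnorm_commute by metis
  qed
  then show ?thesis using L closed_hsubspace_closed[OF M] by blast
qed

lemma closed_hsubspace_minimizing_Cauchy:
  assumes M: "closed_hsubspace M" and f: "\<And>n. f n \<in> M"
    and "\<And>n. (hnorm (x - f n))\<^sup>2 < d\<^sup>2 + inverse (real (Suc n))"
    and d: "0 \<le> d" "\<And>z. z \<in> M \<Longrightarrow> d \<le> hnorm (x - z)" and e: "e > 0"
  shows "\<exists>N. \<forall>m\<ge>N. \<forall>n\<ge>N. hnorm (f m - f n) < e"
proof -
  obtain N :: nat where N: "inverse (real (Suc N)) < e\<^sup>2 / 4"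
    using e by (metis reals_Archimedean zero_less_divide_iff zero_less_numeral zero_less_power)
  have "hnorm (f m - f n) < e" if "N \<le> m" "N \<le> n" for m n
  proof -
    have "inverse (real (Suc m)) \<le> inverse (real (Suc N))" "inverse (real (Suc n)) \<le> inverse (real (Suc N))"
      using that by (simp_all add: le_imp_inverse_le)
    then have "(hnorm (f m - f n))\<^sup>2 < e\<^sup>2"
      using closed_hsubspace_parallelogram_bound[OF M f f d, of m n] assms(3)[of m] assms(3)[of n] N
      by linarith
    then show ?thesis using e by (simp add: power_less_imp_less_base)
  qed
  then show ?thesis by blast
qed

lemma closed_hsubspace_nearest_point:
  assumes M: "closed_hsubspace M"
  shows "\<exists>m\<in>M. \<forall>z\<in>M. hnorm (x - m) \<le> hnorm (x - z)"
proof -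
  define d where "d = Inf ((\<lambda>m. hnorm (x - m)) ` M)"
  have ne: "(\<lambda>m. hnorm (x - m)) ` M \<noteq> {}" using closed_hsubspace_zero[OF M] by blast
  have d0: "0 \<le> d" unfolding d_def using ne by (rule cInf_greatest) auto
  have dle: "d \<le> hnorm (x - z)" if "z \<in> M" for z
    unfolding d_def using that by (intro cInf_lower) (auto intro: bdd_belowI[of _ 0])
  have "\<exists>m\<in>M. (hnorm (x - m))\<^sup>2 < d\<^sup>2 + inverse (real (Suc n))" for n
  proof -
    have "d < sqrt (d\<^sup>2 + inverse (real (Suc n)))" by (intro real_less_rsqrt) simp
    then obtain m where m: "m \<in> M" "hnorm (x - m) < sqrt (d\<^sup>2 + inverse (real (Suc n)))"
      using cInf_lessD[OF ne] unfolding d_def by blast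
    then have "(hnorm (x - m))\<^sup>2 < (sqrt (d\<^sup>2 + inverse (real (Suc n))))\<^sup>2"
      by (intro power_strict_mono) auto
    then show ?thesis using m(1) by auto
  qed
  then obtain f where f: "\<And>n. f n \<in> M" "\<And>n. (hnorm (x - f n))\<^sup>2 < d\<^sup>2 + inverse (real (Suc n))"
    by metis
  have "\<exists>N. \<forall>m\<ge>N. \<forall>n\<ge>N. hnorm (f m - f n) < e" if "e > 0" for e
    using closed_hsubspace_minimizing_Cauchy[OF M f d0 dle that] .
  then obtain L where L: "L \<in> M" "(\<lambda>n. hnorm (f n - L)) \<longlonglongrightarrow> 0"
    using closed_hsubspace_Cauchy_limit[of M f] M f(1) by blast
  have "hnorm (x - L) \<le> sqrt (d\<^sup>2 + inverse (real (Suc n))) + hnorm (f n - L)" for n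
    using hnorm_triangle[of "x - f n" "f n - L"] real_sqrt_less_mono[OF f(2)[of n]] by simp
  moreover have "(\<lambda>n. sqrt (d\<^sup>2 + inverse (real (Suc n))) + hnorm (f n - L)) \<longlonglongrightarrow> sqrt (d\<^sup>2 + 0) + 0"
    by (intro tendsto_intros L LIMSEQ_inverse_real_of_nat)
  ultimately have "hnorm (x - L) \<le> d" using d0 by (simp add: LIMSEQ_le_const)
  then show ?thesis using L(1) dle by force
qed

text \<open>A nearest point is an orthogonal projection: otherwise moving along the offending
  direction decreases the distance, as the discriminant estimate shows.\<close>
lemma closed_hsubspace_orthogonal_point:
  assumes M: "closed_hsubspace M"
  shows "\<exists>m\<in>M. \<forall>z\<in>M. hinner (x - m) z = 0"
proof -
  obtain m where m: "m \<in> M" "\<And>z. z \<in> M \<Longrightarrow> hnorm (x - m) \<le> hnorm (x - z)"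
    using closed_hsubspace_nearest_point[OF M] by blast
  have "hinner (x - m) z = 0" if z: "z \<in> M" for z
  proof -
    have "(cmod (hinner (x - m) z))\<^sup>2 \<le> 0 * (hnorm z)\<^sup>2"
    proof (rule cmod_sq_le_of_quadratic_nonneg)
      fix t :: complex
      have "m + hscale t z \<in> M" using M m z by (simp add: closed_hsubspace_add closed_hsubspace_hscale)
      then have "(hnorm (x - m))\<^sup>2 \<le> (hnorm ((x - m) - hscale t z))\<^sup>2"
        using m(2) by (simp add: power_mono diff_diff_eq)
      then show "0 \<le> 0 - 2 * Re (cnj t * hinner (x - m) z) + (cmod t)\<^sup>2 * (hnorm z)\<^sup>2"
        using hnorm_sq_expand[of "x - m" t z] by simp
    qed simp
    then show ?thesis by simp
  qed
  then show ?thesis using m(1) by blast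
qed

definition hproj :: "'a::complex_hilbert set \<Rightarrow> 'a \<Rightarrow> 'a" where
  "hproj M x = (SOME m. m \<in> M \<and> (\<forall>z\<in>M. hinner (x - m) z = 0))"

lemma
  assumes "closed_hsubspace M"
  shows hproj_in: "hproj M x \<in> M"
    and hproj_orthogonal: "z \<in> M \<Longrightarrow> hinner (x - hproj M x) z = 0"
  using someI_ex[OF closed_hsubspace_orthogonal_point[OF assms, of x, unfolded Bex_def]]
  unfolding hproj_def by blast+

lemma hproj_unique:
  assumes M: "closed_hsubspace M" and m: "m \<in> M" "\<And>z. z \<in> M \<Longrightarrow> hinner (x - m) z = 0"
  shows "hproj M x = m"
proof -
  let ?p = "hproj M x"
  have d: "?p - m \<in> M" using hproj_in[OF M] m(1) M by (simp add: closed_hsubspace_diff)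
  have "hinner (?p - m) (?p - m) = hinner (x - m) (?p - m) - hinner (x - ?p) (?p - m)"
    by (simp add: hinner_simps)
  also have "\<dots> = 0" using m(2)[OF d] hproj_orthogonal[OF M d] by simp
  finally show ?thesis using hinner_eq_zero[of "?p - m"] by simp
qed

lemma bounded_op_hproj:
  assumes M: "closed_hsubspace M"
  shows "bounded_op (hproj M)"
proof -
  have "hproj M (x + y) = hproj M x + hproj M y" for x y
  proof (rule hproj_unique[OF M])
    show "hproj M x + hproj M y \<in> M" using hproj_in[OF M] M by (simp add: closed_hsubspace_add)
    fix z assume "z \<in> M"
    then show "hinner (x + y - (hproj M x + hproj M y)) z = 0"
      using hproj_orthogonal[OF M, of z x] hproj_orthogonal[OF M, of z y]
      by (simp add: hinner_simps algebra_simps)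
  qed
  moreover have "hproj M (hscale a x) = hscale a (hproj M x)" for a x
  proof (rule hproj_unique[OF M])
    show "hscale a (hproj M x) \<in> M" using hproj_in[OF M] M by (simp add: closed_hsubspace_hscale)
    fix z assume "z \<in> M"
    then show "hinner (hscale a x - hscale a (hproj M x)) z = 0"
      using hproj_orthogonal[OF M, of z x] by (simp add: hscale_diff_right[symmetric] hinner_scale_left)
  qed
  moreover have "hnorm (hproj M x) \<le> 1 * hnorm x" for x
  proof -
    define p where "p = hproj M x"
    have o: "hinner (x - p) p = 0" using hproj_in[OF M] hproj_orthogonal[OF M] p_def by blast
    have "hinner x x = hinner (x - p) (x - p) + hinner p p + hinner (x - p) p + cnj (hinner (x - p) p)"
      using hinner_commute[of p "x - p"] by (simp add: hinner_simps algebra_simps)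
    then have "(hnorm x)\<^sup>2 = (hnorm (x - p))\<^sup>2 + (hnorm p)\<^sup>2" using o by (simp add: power2_hnorm)
    then show ?thesis unfolding p_def[symmetric] by (simp add: power2_le_imp_le)
  qed
  ultimately show ?thesis unfolding bounded_op_def by blast
qed

section \<open>Riesz representation and the Hilbert adjoint\<close>

lemma closed_hsubspace_kernel:
  fixes f :: "'a::complex_hilbert \<Rightarrow> complex"
  assumes add: "\<And>x y. f (x + y) = f x + f y"
    and scale: "\<And>a x. f (hscale a x) = a * f x"
    and bound: "\<And>x. cmod (f x) \<le> C * hnorm x"
  shows "closed_hsubspace {x. f x = 0}"
  unfolding closed_hsubspace_def
proof (intro conjI ballI allI subsetI)
  have diff: "f (x - y) = f x - f y" for x y
    using add[of x "hscale (-1) y"] scale[of "-1" y] by simp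
  show "0 \<in> {x. f x = 0}" using scale[of 0 0] by simp
  show "x + y \<in> {x. f x = 0}" if "x \<in> {x. f x = 0}" "y \<in> {x. f x = 0}" for x y
    using that add by simp
  show "hscale a x \<in> {x. f x = 0}" if "x \<in> {x. f x = 0}" for a x
    using that scale by simp
  fix x assume x: "x \<in> hclosure {x. f x = 0}"
  show "x \<in> {x. f x = 0}"
  proof (rule ccontr)
    assume "x \<notin> {x. f x = 0}"
    then have fx: "cmod (f x) > 0" by simp
    define C' where "C' = max C 1"
    have C': "C' > 0" "C \<le> C'" unfolding C'_def by auto
    have "cmod (f x) / (2 * C') > 0" using fx C' by simp
    then obtain y where y: "f y = 0" "hnorm (x - y) < cmod (f x) / (2 * C')"
      using x unfolding hclosure_def by blast
    have "cmod (f x) = cmod (f (x - y))" using y(1) diff[of x y] by simp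
    also have "\<dots> \<le> C' * hnorm (x - y)" using bound[of "x - y"] C' by (meson hnorm_nonneg mult_right_mono order_trans)
    also have "\<dots> < C' * (cmod (f x) / (2 * C'))" using y(2) C'(1) by (rule mult_strict_left_mono)
    also have "\<dots> = cmod (f x) / 2" using C'(1) by simp
    finally show False using fx by simp
  qed
qed

text \<open>The representing vector is a multiple of a vector orthogonal to the kernel.\<close>
lemma riesz_representation:
  fixes f :: "'a::complex_hilbert \<Rightarrow> complex"
  assumes add: "\<And>x y. f (x + y) = f x + f y"
    and scale: "\<And>a x. f (hscale a x) = a * f x"
    and bound: "\<And>x. cmod (f x) \<le> C * hnorm x"
  shows "\<exists>v. \<forall>x. f x = hinner x v"
proof (cases "\<forall>x. f x = 0")
  case True
  then show ?thesis by (intro exI[of _ 0]) simp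
next
  case False
  then obtain x0 where x0: "f x0 \<noteq> 0" by blast
  define K where "K = {x. f x = 0}"
  have K: "closed_hsubspace K" unfolding K_def using assms by (rule closed_hsubspace_kernel)
  have diff: "f (x - y) = f x - f y" for x y
    using add[of x "hscale (-1) y"] scale[of "-1" y] by simp
  define z where "z = x0 - hproj K x0"
  have fz: "f z \<noteq> 0" using x0 hproj_in[OF K, of x0] unfolding z_def by (simp add: diff K_def)
  have zK: "hinner w z = 0" if "w \<in> K" for w
    using hproj_orthogonal[OF K that, of x0] hinner_commute[of w z] unfolding z_def by simp
  have zz: "hinner z z \<noteq> 0" using fz hinner_eq_zero[of z] scale[of 0 0] by auto
  have "f x = hinner x (hscale (cnj (f z / hinner z z)) z)" for x
  proof -
    have "x - hscale (f x / f z) z \<in> K" unfolding K_def using fz by (simp add: diff scale)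
    then have "hinner (x - hscale (f x / f z) z) z = 0" by (rule zK)
    then have "hinner x z = (f x / f z) * hinner z z" by (simp add: hinner_simps)
    then show ?thesis using fz zz by (simp add: hinner_simps field_simps)
  qed
  then show ?thesis by blast
qed

lemma hadjoint_exists:
  assumes T: "bounded_op T"
  shows "\<exists>S. bounded_op S \<and> (\<forall>x y. hinner (T x) y = hinner x (S y))"
proof -
  obtain K where K: "K > 0" "\<And>x. hnorm (T x) \<le> K * hnorm x" using bounded_op_bound[OF T] by blast
  have "\<exists>v. \<forall>x. hinner (T x) y = hinner x v" for y
  proof (rule riesz_representation)
    show "hinner (T (x + z)) y = hinner (T x) y + hinner (T z) y" for x z
      by (simp add: bounded_op_add[OF T] hinner_simps)
    show "hinner (T (hscale a x)) y = a * hinner (T x) y" for a x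
      by (simp add: bounded_op_hscale[OF T] hinner_simps)
    show "cmod (hinner (T x) y) \<le> (K * hnorm y) * hnorm x" for x
      using hnorm_Cauchy_Schwarz[of "T x" y] mult_right_mono[OF K(2)[of x] hnorm_nonneg[of y]]
      by (simp add: algebra_simps)
  qed
  then obtain S where S: "\<And>x y. hinner (T x) y = hinner x (S y)" by metis
  have "S (y + z) = S y + S z" for y z
    by (rule hinner_ext) (simp add: S[symmetric] hinner_simps)
  moreover have "S (hscale a y) = hscale a (S y)" for a y
    by (rule hinner_ext) (simp add: S[symmetric] hinner_simps)
  moreover have "hnorm (S y) \<le> K * hnorm y" for y
  proof -
    have "(hnorm (S y))\<^sup>2 = Re (hinner (T (S y)) y)" by (simp only: power2_hnorm S)
    also have "\<dots> \<le> hnorm (T (S y)) * hnorm y"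
      using complex_Re_le_cmod hnorm_Cauchy_Schwarz by (rule order_trans)
    also have "\<dots> \<le> K * hnorm (S y) * hnorm y" using K by (simp add: mult_right_mono)
    finally have "hnorm (S y) * hnorm (S y) \<le> hnorm (S y) * (K * hnorm y)"
      by (simp add: power2_eq_square algebra_simps)
    then show ?thesis using K(1) mult_left_le_imp_le[of "hnorm (S y)"]
      by (cases "hnorm (S y) = 0") auto
  qed
  ultimately show ?thesis unfolding bounded_op_def using S by blast
qed

lemma hadj_adjoint:
  assumes "bounded_op T"
  shows "hinner (T x) y = hinner x (hadj T y)"
proof -
  have "\<exists>!S. bounded_op S \<and> (\<forall>x y. hinner (T x) y = hinner x (S y))"
  proof (rule ex_ex1I)
    fix S1 S2 assume "bounded_op S1 \<and> (\<forall>x y. hinner (T x) y = hinner x (S1 y))"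
      "bounded_op S2 \<and> (\<forall>x y. hinner (T x) y = hinner x (S2 y))"
    then show "S1 = S2" by (intro ext hinner_ext) simp
  qed (rule hadjoint_exists[OF assms])
  then have "bounded_op (hadj T) \<and> (\<forall>x y. hinner (T x) y = hinner x (hadj T y))"
    unfolding hadj_def by (rule theI')
  then show ?thesis by auto
qed

section \<open>The closure of \<open>R(A)\<close> and the A-adjoint\<close>

lemma in_hclosure: "x \<in> S \<Longrightarrow> x \<in> hclosure S"
  unfolding hclosure_def by (auto intro!: bexI[of _ x])

lemma hclosure_idem:
  assumes x: "x \<in> hclosure (hclosure S)"
  shows "x \<in> hclosure S"
  unfolding hclosure_def
proof (intro CollectI allI impI)
  fix e :: real assume "e > 0"
  then have "e / 2 > 0" by simp
  then obtain y where y: "y \<in> hclosure S" "hnorm (x - y) < e / 2"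
    using x unfolding hclosure_def by blast
  obtain w where "w \<in> S" "hnorm (y - w) < e / 2"
    using y(1) \<open>e / 2 > 0\<close> unfolding hclosure_def by blast
  moreover have "hnorm (x - w) \<le> hnorm (x - y) + hnorm (y - w)"
    using hnorm_triangle[of "x - y" "y - w"] by simp
  ultimately show "\<exists>w\<in>S. hnorm (x - w) < e" using y(2) by (intro bexI[of _ w]) auto
qed

lemma closed_hsubspace_hclosure:
  assumes zero: "0 \<in> S" and add: "\<And>x y. x \<in> S \<Longrightarrow> y \<in> S \<Longrightarrow> x + y \<in> S"
    and scale: "\<And>a x. x \<in> S \<Longrightarrow> hscale a x \<in> S"
  shows "closed_hsubspace (hclosure S)"
  unfolding closed_hsubspace_def
proof (intro conjI ballI allI subsetI)
  show "0 \<in> hclosure S" using zero by (rule in_hclosure)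
  fix x y assume x: "x \<in> hclosure S" and y: "y \<in> hclosure S"
  show "x + y \<in> hclosure S" unfolding hclosure_def
  proof (intro CollectI allI impI)
    fix e :: real assume "e > 0"
    then have "e / 2 > 0" by simp
    then obtain x' y' where "x' \<in> S" "hnorm (x - x') < e / 2" "y' \<in> S" "hnorm (y - y') < e / 2"
      using x y unfolding hclosure_def by blast
    moreover have "hnorm (x + y - (x' + y')) \<le> hnorm (x - x') + hnorm (y - y')"
      using hnorm_triangle[of "x - x'" "y - y'"] by (simp add: algebra_simps)
    ultimately show "\<exists>w\<in>S. hnorm (x + y - w) < e" using add by (intro bexI[of _ "x' + y'"]) auto
  qed
next
  fix a x assume x: "x \<in> hclosure S"
  show "hscale a x \<in> hclosure S" unfolding hclosure_def
  proof (intro CollectI allI impI)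
    fix e :: real assume "e > 0"
    moreover have "cmod a + 1 > 0" by (simp add: add_nonneg_pos)
    ultimately have "e / (cmod a + 1) > 0" by simp
    then obtain x' where x': "x' \<in> S" "hnorm (x - x') < e / (cmod a + 1)"
      using x unfolding hclosure_def by blast
    have "hnorm (hscale a x - hscale a x') \<le> (cmod a + 1) * hnorm (x - x')"
      by (simp add: hscale_diff_right[symmetric] hnorm_hscale mult_right_mono)
    also have "\<dots> < e" using x'(2) by (simp add: field_simps add_pos_nonneg)
    finally show "\<exists>w\<in>S. hnorm (hscale a x - w) < e" using x' scale by blast
  qed
next
  show "x \<in> hclosure S" if "x \<in> hclosure (hclosure S)" for x
    using that by (rule hclosure_idem)
qed

lemma closed_hsubspace_range:
  assumes A: "bounded_op A"
  shows "closed_hsubspace (hclosure (range A))"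
proof (rule closed_hsubspace_hclosure)
  show "0 \<in> range A" using rangeI[of A 0] by (simp add: A)
  show "x + y \<in> range A" if "x \<in> range A" "y \<in> range A" for x y
    using that rangeI[of A] bounded_op_add[OF A, symmetric] by blast
  show "hscale a x \<in> range A" if "x \<in> range A" for a x
    using that rangeI[of A] bounded_op_hscale[OF A, symmetric] by blast
qed

lemma hclosure_orthogonal_eq_zero:
  assumes u: "u \<in> hclosure S" and orth: "\<And>a. a \<in> S \<Longrightarrow> hinner u a = 0"
  shows "u = 0"
proof -
  have "hnorm u \<le> e" if e: "e > 0" for e
  proof -
    obtain a where a: "a \<in> S" "hnorm (u - a) < e" using u e unfolding hclosure_def by blast
    have "hinner u u = hinner u (u - a)" using orth[OF a(1)] by (simp add: hinner_simps)
    then have "hnorm u * hnorm u = Re (hinner u (u - a))" using power2_hnorm[of u] by (simp add: power2_eq_square)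
    also have "\<dots> \<le> hnorm u * hnorm (u - a)"
      using complex_Re_le_cmod hnorm_Cauchy_Schwarz by (rule order_trans)
    finally have "hnorm u * hnorm u \<le> hnorm u * hnorm (u - a)" .
    then show ?thesis using a(2) mult_left_le_imp_le[of "hnorm u" "hnorm u"] e
      by (cases "hnorm u = 0") auto
  qed
  then have "hnorm u \<le> 0" by (rule field_le_epsilon) simp
  then have "hnorm u = 0" using hnorm_nonneg[of u] by linarith
  then show ?thesis by simp
qed

lemma range_closure_null_eq_zero:
  assumes A: "positive_op A" and u: "u \<in> hclosure (range A)" and "A u = 0"
  shows "u = 0"
  using u by (rule hclosure_orthogonal_eq_zero)
    (use assms positive_op_selfadjoint[OF A, of u] in auto)

lemma norm_A_pos_on_range_closure:
  assumes A: "positive_op A" and u: "u \<in> hclosure (range A)" "u \<noteq> 0"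
  shows "norm_A A u > 0"
  using range_closure_null_eq_zero[OF A u(1)] null_of_norm_A[OF A, of u] u(2) norm_A_nonneg[OF A, of u]
  by linarith

lemma null_diff_hproj_range:
  assumes A: "positive_op A"
  shows "A (x - hproj (hclosure (range A)) x) = 0"
proof -
  let ?u = "x - hproj (hclosure (range A)) x"
  have "hinner (A ?u) (A ?u) = hinner ?u (A (A ?u))" using positive_op_selfadjoint[OF A] by simp
  also have "\<dots> = 0"
    using hproj_orthogonal[OF closed_hsubspace_range[OF positive_op_bounded[OF A]]] by (simp add: in_hclosure)
  finally show ?thesis by (simp add: hinner_eq_zero)
qed

lemma BA_bounded: "T \<in> BA A \<Longrightarrow> bounded_op T"
  unfolding BA_def by blast

lemma eq_if_A_comp_eq_on_range_closure:
  assumes A: "positive_op A"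
    and X: "range X \<subseteq> hclosure (range A)" and Y: "range Y \<subseteq> hclosure (range A)"
    and eq: "A \<circ> X = A \<circ> Y"
  shows "X = Y"
proof
  fix y
  have b: "bounded_op A" using positive_op_bounded[OF A] .
  have "X y - Y y \<in> hclosure (range A)"
    using X Y closed_hsubspace_diff[OF closed_hsubspace_range[OF b]] by blast
  moreover have "A (X y - Y y) = 0" using eq by (simp add: bounded_op_diff[OF b] fun_eq_iff)
  ultimately have "X y - Y y = 0" by (rule range_closure_null_eq_zero[OF A])
  then show "X y = Y y" by simp
qed

lemma A_comp_A_adjoint:
  assumes A: "positive_op A" and T: "bounded_op T" and W: "\<And>x y. inner_A A (T x) y = inner_A A x (W y)"
  shows "A (W y) = hadj T (A y)"
proof (rule hinner_ext)
  fix x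
  have "hinner x (A (W y)) = hinner (A (T x)) y" using W by (simp add: inner_A_def positive_op_selfadjoint[OF A])
  also have "\<dots> = hinner x (hadj T (A y))"
    by (simp add: positive_op_selfadjoint[OF A, symmetric] hadj_adjoint[OF T])
  finally show "hinner x (A (W y)) = hinner x (hadj T (A y))" .
qed

text \<open>Existence of the solution of \<open>A X = T\<^sup>* A\<close> with range in the closure of \<open>R(A)\<close>:
  project any A-adjoint \<open>W\<close> of \<open>T\<close> onto that closure, which does not change \<open>A W\<close>.\<close>
lemma
  assumes A: "positive_op A" and T: "T \<in> BA A"
  shows bounded_op_sharpA: "bounded_op (sharpA A T)"
    and A_comp_sharpA: "A \<circ> sharpA A T = hadj T \<circ> A"
    and range_sharpA: "range (sharpA A T) \<subseteq> hclosure (range A)"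
proof -
  have b: "bounded_op A" using positive_op_bounded[OF A] .
  obtain W where W: "bounded_op W" "\<And>x y. inner_A A (T x) y = inner_A A x (W y)"
    using T unfolding BA_def by blast
  have AW: "A (W y) = hadj T (A y)" for y
    using A_comp_A_adjoint[OF A BA_bounded[OF T] W(2)] .
  define M where "M = hclosure (range A)"
  have M: "closed_hsubspace M" unfolding M_def by (rule closed_hsubspace_range[OF b])
  define X where "X = (\<lambda>y. hproj M (W y))"
  have Xb: "bounded_op X" unfolding X_def by (rule bounded_op_compose[OF bounded_op_hproj[OF M] W(1)])
  have AX: "A \<circ> X = hadj T \<circ> A"
  proof
    fix y
    have "A (X y) = A (W y)"
      using null_diff_hproj_range[OF A, of "W y"] unfolding X_def M_def by (simp add: bounded_op_diff[OF b])
    then show "(A \<circ> X) y = (hadj T \<circ> A) y" using AW by simp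
  qed
  have XR: "range X \<subseteq> M" unfolding X_def using hproj_in[OF M] by auto
  have "\<exists>!X. bounded_op X \<and> A \<circ> X = hadj T \<circ> A \<and> range X \<subseteq> hclosure (range A)"
  proof (rule ex1I[of _ X])
    show "bounded_op X \<and> A \<circ> X = hadj T \<circ> A \<and> range X \<subseteq> hclosure (range A)"
      using Xb AX XR unfolding M_def by (intro conjI)
    fix Y assume "bounded_op Y \<and> A \<circ> Y = hadj T \<circ> A \<and> range Y \<subseteq> hclosure (range A)"
    then have "range Y \<subseteq> hclosure (range A)" "A \<circ> Y = A \<circ> X" using AX by auto
    then show "Y = X" using eq_if_A_comp_eq_on_range_closure[OF A _ XR[unfolded M_def]] by blast
  qed
  then have "bounded_op (sharpA A T) \<and> A \<circ> sharpA A T = hadj T \<circ> A \<and> range (sharpA A T) \<subseteq> hclosure (range A)"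
    unfolding sharpA_def by (rule theI')
  then show "bounded_op (sharpA A T)" "A \<circ> sharpA A T = hadj T \<circ> A"
      "range (sharpA A T) \<subseteq> hclosure (range A)"
    by auto
qed

lemma inner_A_sharpA_right:
  assumes A: "positive_op A" and T: "T \<in> BA A"
  shows "inner_A A (T x) y = inner_A A x (sharpA A T y)"
proof -
  have "inner_A A (T x) y = hinner x (hadj T (A y))"
    by (simp add: inner_A_def positive_op_selfadjoint[OF A, symmetric] hadj_adjoint[OF BA_bounded[OF T]])
  also have "hadj T (A y) = A (sharpA A T y)" using fun_cong[OF A_comp_sharpA[OF A T], of y] by simp
  also have "hinner x (A (sharpA A T y)) = inner_A A x (sharpA A T y)"
    by (simp add: inner_A_def positive_op_selfadjoint[OF A])
  finally show ?thesis .
qed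

lemma inner_A_sharpA_left:
  assumes A: "positive_op A" and T: "T \<in> BA A"
  shows "inner_A A (sharpA A T x) y = inner_A A x (T y)"
proof -
  have "inner_A A (sharpA A T x) y = cnj (inner_A A (T y) x)"
    by (simp add: inner_A_commute[OF A, of _ "sharpA A T x"] inner_A_sharpA_right[OF A T])
  also have "\<dots> = inner_A A x (T y)" by (simp add: inner_A_commute[OF A, of x "T y"])
  finally show ?thesis .
qed

lemma sharpA_eqI:
  assumes A: "positive_op A" and T: "T \<in> BA A"
    and X: "bounded_op X" "range X \<subseteq> hclosure (range A)"
    and adj: "\<And>x y. inner_A A (T x) y = inner_A A x (X y)"
  shows "sharpA A T = X"
proof (rule eq_if_A_comp_eq_on_range_closure[OF A range_sharpA[OF A T] X(2)])
  have "A (sharpA A T y) = A (X y)" for y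
  proof (rule hinner_ext)
    fix x
    have "hinner x (A (sharpA A T y)) = inner_A A (T x) y"
      using inner_A_sharpA_right[OF A T, of x y] by (simp add: inner_A_def positive_op_selfadjoint[OF A])
    also have "\<dots> = hinner x (A (X y))"
      using adj[of x y] by (simp add: inner_A_def positive_op_selfadjoint[OF A])
    finally show "hinner x (A (sharpA A T y)) = hinner x (A (X y))" .
  qed
  then show "A \<circ> sharpA A T = A \<circ> X" by auto
qed

lemma
  assumes A: "positive_op A" and T: "T \<in> BA A"
  shows BA_hscale: "(\<lambda>x. hscale c (T x)) \<in> BA A"
    and sharpA_hscale: "sharpA A (\<lambda>x. hscale c (T x)) = (\<lambda>x. hscale (cnj c) (sharpA A T x))"
proof -
  have adj: "inner_A A (hscale c (T x)) y = inner_A A x (hscale (cnj c) (sharpA A T y))" for x y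
    using inner_A_sharpA_right[OF A T, of x y] by (simp add: inner_A_hscale_left[OF A] inner_A_hscale_right)
  have bounded: "bounded_op (\<lambda>x. hscale (cnj c) (sharpA A T x))"
    by (rule bounded_op_hscale_op[OF bounded_op_sharpA[OF A T]])
  show cT: "(\<lambda>x. hscale c (T x)) \<in> BA A"
    unfolding BA_def using bounded_op_hscale_op[OF BA_bounded[OF T]] bounded adj by blast
  have "range (\<lambda>x. hscale (cnj c) (sharpA A T x)) \<subseteq> hclosure (range A)"
    using range_sharpA[OF A T] closed_hsubspace_hscale[OF closed_hsubspace_range[OF positive_op_bounded[OF A]]]
    by (simp add: image_subset_iff)
  then show "sharpA A (\<lambda>x. hscale c (T x)) = (\<lambda>x. hscale (cnj c) (sharpA A T x))"
    by (rule sharpA_eqI[OF A cT bounded _ adj])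
qed

section \<open>Operators in \<open>B_A(H)\<close> are A-bounded\<close>

definition A_selfadjoint :: "('a::complex_hilbert \<Rightarrow> 'a) \<Rightarrow> ('a \<Rightarrow> 'a) \<Rightarrow> bool" where
  "A_selfadjoint A R \<longleftrightarrow> bounded_op R \<and> (\<forall>u v. inner_A A (R u) v = inner_A A u (R v))"

lemma A_selfadjoint_in_BA: "A_selfadjoint A R \<Longrightarrow> R \<in> BA A"
  unfolding A_selfadjoint_def BA_def by blast

lemma A_selfadjoint_funpow:
  assumes "A_selfadjoint A B"
  shows "inner_A A ((B ^^ k) u) v = inner_A A u ((B ^^ k) v)"
proof (induction k arbitrary: u v)
  case 0
  then show ?case by simp
next
  case (Suc k)
  have "inner_A A ((B ^^ Suc k) u) v = inner_A A ((B ^^ k) u) (B v)"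
    using assms unfolding A_selfadjoint_def by simp
  also have "\<dots> = inner_A A u ((B ^^ Suc k) v)" by (simp add: Suc funpow_swap1)
  finally show ?case .
qed

lemma hnorm_funpow_le:
  fixes B :: "'a::complex_hilbert \<Rightarrow> 'a"
  assumes B: "\<And>x. hnorm (B x) \<le> M * hnorm x" and M: "0 \<le> M"
  shows "hnorm ((B ^^ k) x) \<le> M ^ k * hnorm x"
proof (induction k)
  case 0
  show ?case by simp
next
  case (Suc k)
  have "hnorm ((B ^^ Suc k) x) \<le> M * hnorm ((B ^^ k) x)" using B by simp
  also have "\<dots> \<le> M * (M ^ k * hnorm x)" using Suc M by (simp add: mult_left_mono)
  finally show ?case by (simp add: mult.assoc)
qed

lemma norm_A_le_hnorm:
  assumes A: "positive_op A"
  shows "\<exists>C\<ge>0. \<forall>y. norm_A A y \<le> C * hnorm y"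
proof -
  obtain K where K: "K > 0" "\<And>x. hnorm (A x) \<le> K * hnorm x"
    using bounded_op_bound[OF positive_op_bounded[OF A]] by blast
  have "norm_A A y \<le> sqrt K * hnorm y" for y
  proof -
    have "(norm_A A y)\<^sup>2 \<le> hnorm (A y) * hnorm y"
      unfolding power2_norm_A[OF A] using complex_Re_le_cmod hnorm_Cauchy_Schwarz by (rule order_trans)
    also have "\<dots> \<le> K * hnorm y * hnorm y" using K(2)[of y] by (simp add: mult_right_mono)
    also have "\<dots> = (sqrt K * hnorm y)\<^sup>2" using K(1) by (simp add: power2_eq_square power_mult_distrib)
    finally show ?thesis by (rule power2_le_imp_le) (simp add: K(1) less_imp_le)
  qed
  then show ?thesis using K by (intro exI[of _ "sqrt K"]) auto
qed

lemma power_le_of_iterated_square_bound: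
  fixes a :: real and b :: "nat \<Rightarrow> real"
  assumes a: "0 < a" and b: "\<And>n. 0 \<le> b n" and sq: "\<And>n. (b n)\<^sup>2 \<le> a * b (Suc n)"
  shows "(b 0) ^ (2 ^ n) * a \<le> a ^ (2 ^ n) * b n"
proof (induction n)
  case 0
  then show ?case by (simp add: mult.commute)
next
  case (Suc n)
  have "((b 0) ^ (2 ^ n) * a)\<^sup>2 \<le> (a ^ (2 ^ n))\<^sup>2 * (b n)\<^sup>2"
    using power_mono[OF Suc, of 2] b a by (simp add: power_mult_distrib)
  also have "\<dots> \<le> (a ^ (2 ^ n))\<^sup>2 * (a * b (Suc n))" using sq[of n] by (simp add: mult_left_mono)
  finally have "a * ((b 0) ^ (2 ^ Suc n) * a) \<le> a * (a ^ (2 ^ Suc n) * b (Suc n))"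
    by (simp add: power2_eq_square power_add mult_2 algebra_simps)
  then show ?case using a by simp
qed

text \<open>Iterating \<open>b\<^sub>n\<^sup>2 \<le> a b\<^sub>n\<^sub>+\<^sub>1\<close> gives \<open>b\<^sub>0 \<le> a\<^bsup>1 - 2\<^sup>-\<^sup>n\<^esup> b\<^sub>n\<^bsup>2\<^sup>-\<^sup>n\<^esup>\<close>,
  and the growth bound makes the right-hand side tend to \<open>M a\<close>.\<close>
lemma le_of_iterated_square_bound:
  fixes a K M :: real and b :: "nat \<Rightarrow> real"
  assumes a: "0 \<le> a" and b: "\<And>n. 0 \<le> b n" and sq: "\<And>n. (b n)\<^sup>2 \<le> a * b (Suc n)"
    and growth: "\<And>n. b n \<le> K * M ^ (2 ^ n)" and M: "0 < M"
  shows "b 0 \<le> M * a"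
proof (cases "a = 0")
  case True
  then show ?thesis using sq[of 0] by simp
next
  case False
  then have a0: "a > 0" using a by simp
  have iter: "(b 0) ^ (2 ^ n) * a \<le> a ^ (2 ^ n) * b n" for n
    using power_le_of_iterated_square_bound[of a b, OF a0 b sq] .
  show ?thesis
  proof (rule ccontr)
    assume neg: "\<not> ?thesis"
    define r where "r = b 0 / (M * a)"
    have r1: "r > 1" unfolding r_def using neg M a0 by simp
    obtain n where n: "(K + 1) / a < r ^ n" using real_arch_pow[OF r1] by blast
    have "r ^ (2 ^ n) * (M ^ (2 ^ n) * a ^ (2 ^ n)) * a = (b 0) ^ (2 ^ n) * a"
      unfolding r_def using M a0 by (simp add: power_divide power_mult_distrib)
    also have "\<dots> \<le> (M ^ (2 ^ n) * a ^ (2 ^ n)) * K"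
      using iter[of n] mult_left_mono[OF growth[of n], of "a ^ (2 ^ n)"] a by (simp add: algebra_simps)
    finally have "r ^ (2 ^ n) * a \<le> K" using M a0 by (simp add: algebra_simps)
    then have "r ^ (2 ^ n) < (K + 1) / a" using a0 by (simp add: field_simps)
    moreover have "r ^ n \<le> r ^ (2 ^ n)" using r1 by (intro power_increasing) (auto simp: less_imp_le)
    ultimately show False using n by simp
  qed
qed

lemma A_selfadjoint_norm_A_le:
  assumes A: "positive_op A" and B: "A_selfadjoint A B"
    and M: "\<And>x. hnorm (B x) \<le> M * hnorm x" "0 < M"
  shows "norm_A A (B x) \<le> M * norm_A A x"
proof -
  obtain C where C: "C \<ge> 0" "\<And>y. norm_A A y \<le> C * hnorm y" using norm_A_le_hnorm[OF A] by blast
  define b where "b n = norm_A A ((B ^^ (2 ^ n)) x)" for n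
  have "b 0 \<le> M * norm_A A x"
  proof (rule le_of_iterated_square_bound[where K = "C * hnorm x"])
    show "(b n)\<^sup>2 \<le> norm_A A x * b (Suc n)" for n
    proof -
      have "of_real ((b n)\<^sup>2) = inner_A A ((B ^^ (2 ^ n)) x) ((B ^^ (2 ^ n)) x)"
        unfolding b_def by (rule inner_A_self[OF A, symmetric])
      also have "\<dots> = inner_A A x ((B ^^ (2 ^ n)) ((B ^^ (2 ^ n)) x))"
        by (rule A_selfadjoint_funpow[OF B])
      also have "(B ^^ (2 ^ n)) ((B ^^ (2 ^ n)) x) = (B ^^ (2 ^ Suc n)) x"
        by (simp add: funpow_add mult_2)
      finally have "(b n)\<^sup>2 = cmod (inner_A A x ((B ^^ (2 ^ Suc n)) x))"
        by (metis norm_of_real abs_of_nonneg zero_le_power2)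
      also have "\<dots> \<le> norm_A A x * b (Suc n)" unfolding b_def by (rule inner_A_Cauchy_Schwarz[OF A])
      finally show ?thesis .
    qed
    show "b n \<le> C * hnorm x * M ^ (2 ^ n)" for n
    proof -
      have "b n \<le> C * hnorm ((B ^^ (2 ^ n)) x)" unfolding b_def by (rule C(2))
      also have "\<dots> \<le> C * (M ^ (2 ^ n) * hnorm x)"
        using hnorm_funpow_le[OF M(1)] M(2) C(1) by (simp add: mult_left_mono less_imp_le)
      finally show ?thesis by (simp add: algebra_simps)
    qed
  qed (use A M(2) b_def in simp_all)
  then show ?thesis unfolding b_def by simp
qed

lemma A_selfadjoint_A_adjoint_comp:
  assumes A: "positive_op A" and T: "bounded_op T"
    and W: "bounded_op W" "\<And>x y. inner_A A (T x) y = inner_A A x (W y)"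
  shows "A_selfadjoint A (\<lambda>x. W (T x))"
  unfolding A_selfadjoint_def
proof (intro conjI allI)
  show "bounded_op (\<lambda>x. W (T x))" by (rule bounded_op_compose[OF W(1) T])
  fix u v
  have "inner_A A (W (T u)) v = cnj (inner_A A v (W (T u)))" by (rule inner_A_commute[OF A])
  also have "\<dots> = cnj (inner_A A (T v) (T u))" by (simp add: W(2))
  also have "\<dots> = inner_A A (T u) (T v)" by (simp add: inner_A_commute[OF A, of "T u"])
  also have "\<dots> = inner_A A u (W (T v))" by (rule W(2))
  finally show "inner_A A (W (T u)) v = inner_A A u (W (T v))" .
qed

text \<open>\<open>\<parallel>T x\<parallel>\<^sub>A\<^sup>2 = \<langle>x, W T x\<rangle>\<^sub>A \<le> \<parallel>x\<parallel>\<^sub>A \<parallel>W T x\<parallel>\<^sub>A\<close> for an A-adjoint \<open>W\<close> of \<open>T\<close>.\<close>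
lemma BA_norm_A_bound:
  assumes A: "positive_op A" and T: "T \<in> BA A"
  shows "\<exists>c\<ge>0. \<forall>x. norm_A A (T x) \<le> c * norm_A A x"
proof -
  obtain W where W: "bounded_op W" "\<And>x y. inner_A A (T x) y = inner_A A x (W y)"
    using T unfolding BA_def by blast
  define B where "B = (\<lambda>x. W (T x))"
  have B_sa: "A_selfadjoint A B" unfolding B_def by (rule A_selfadjoint_A_adjoint_comp[OF A BA_bounded[OF T] W])
  obtain M where M: "M > 0" "\<And>x. hnorm (B x) \<le> M * hnorm x"
    using bounded_op_bound[OF bounded_op_compose[OF W(1) BA_bounded[OF T]]] unfolding B_def by blast
  have B: "norm_A A (B x) \<le> M * norm_A A x" for x
    using A_selfadjoint_norm_A_le[OF A B_sa M(2) M(1)] .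
  have "norm_A A (T x) \<le> sqrt M * norm_A A x" for x
  proof -
    have "of_real ((norm_A A (T x))\<^sup>2) = inner_A A x (B x)"
      unfolding B_def W(2)[symmetric] by (rule inner_A_self[OF A, symmetric])
    then have "(norm_A A (T x))\<^sup>2 \<le> norm_A A x * norm_A A (B x)"
      using inner_A_Cauchy_Schwarz[OF A, of x "B x"] by (metis norm_of_real abs_of_nonneg zero_le_power2)
    also have "\<dots> \<le> norm_A A x * (M * norm_A A x)" using B[of x] A by (simp add: mult_left_mono)
    also have "\<dots> = (sqrt M * norm_A A x)\<^sup>2" using M(1) by (simp add: power2_eq_square power_mult_distrib)
    finally show ?thesis by (rule power2_le_imp_le) (simp add: A M(1) less_imp_le)
  qed
  then show ?thesis using M(1) by (intro exI[of _ "sqrt M"]) auto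
qed

section \<open>The A-operator seminorm and the numerical range\<close>

lemma opnorm_A_le:
  assumes A: "positive_op A" and u: "A u \<noteq> 0"
    and bound: "\<And>x. norm_A A (X x) \<le> k * norm_A A x"
  shows "opnorm_A A X \<le> k"
  unfolding opnorm_A_def
proof (rule cSup_least)
  show "{norm_A A (X x) / norm_A A x |x. x \<in> hclosure (range A) \<and> x \<noteq> 0} \<noteq> {}"
    using u in_hclosure[OF rangeI[of A u]] by blast
  fix d assume "d \<in> {norm_A A (X x) / norm_A A x |x. x \<in> hclosure (range A) \<and> x \<noteq> 0}"
  then obtain x where "d = norm_A A (X x) / norm_A A x" "x \<in> hclosure (range A)" "x \<noteq> 0" by blast
  then show "d \<le> k" using bound[of x] norm_A_pos_on_range_closure[OF A] by (simp add: divide_le_eq)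
qed

lemma norm_A_le_opnorm_A_on_range_closure:
  assumes A: "positive_op A" and k: "\<And>x. norm_A A (X x) \<le> k * norm_A A x"
    and x: "x \<in> hclosure (range A)" "x \<noteq> 0"
  shows "norm_A A (X x) \<le> opnorm_A A X * norm_A A x"
proof -
  have "bdd_above {norm_A A (X x) / norm_A A x |x. x \<in> hclosure (range A) \<and> x \<noteq> 0}"
  proof (rule bdd_aboveI)
    fix d assume "d \<in> {norm_A A (X x) / norm_A A x |x. x \<in> hclosure (range A) \<and> x \<noteq> 0}"
    then obtain x where "d = norm_A A (X x) / norm_A A x" "x \<in> hclosure (range A)" "x \<noteq> 0" by blast
    then show "d \<le> k" using k[of x] norm_A_pos_on_range_closure[OF A] by (simp add: divide_le_eq)
  qed
  then have "norm_A A (X x) / norm_A A x \<le> opnorm_A A X"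
    unfolding opnorm_A_def using x by (intro cSup_upper) auto
  then show ?thesis using norm_A_pos_on_range_closure[OF A x] by (simp add: divide_le_eq)
qed

text \<open>Split \<open>y\<close> into its projection onto the closure of \<open>R(A)\<close> and an A-null remainder.\<close>
lemma norm_A_le_opnorm_A:
  assumes A: "positive_op A" and X: "X \<in> BA A"
  shows "norm_A A (X y) \<le> opnorm_A A X * norm_A A y"
proof -
  obtain k where k: "\<And>x. norm_A A (X x) \<le> k * norm_A A x" using BA_norm_A_bound[OF A X] by blast
  define p where "p = hproj (hclosure (range A)) y"
  have p: "p \<in> hclosure (range A)"
    unfolding p_def by (rule hproj_in[OF closed_hsubspace_range[OF positive_op_bounded[OF A]]])
  have null: "norm_A A (y - p) = 0"
    unfolding p_def by (rule norm_A_of_null[of A, OF null_diff_hproj_range[OF A]])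
  have "norm_A A (X y) \<le> norm_A A (X p) + norm_A A (X (y - p))"
    using norm_A_triangle[OF A, of "X p" "X (y - p)"] by (simp add: bounded_op_diff[OF BA_bounded[OF X]])
  also have "norm_A A (X (y - p)) = 0" using k[of "y - p"] null norm_A_nonneg[OF A, of "X (y - p)"] by simp
  finally have Xy: "norm_A A (X y) \<le> norm_A A (X p)" by simp
  have y: "norm_A A y = norm_A A p"
    using norm_A_triangle[OF A, of p "y - p"] norm_A_diff_triangle[OF A, of y "y - p"] null by simp
  show ?thesis
  proof (cases "p = 0")
    case True
    then show ?thesis using Xy k[of p] y A by simp
  next
    case False
    then show ?thesis using Xy y norm_A_le_opnorm_A_on_range_closure[OF A k p] by simp
  qed
qed

lemma opnorm_A_nonneg:
  assumes A: "positive_op A" and u: "A u \<noteq> 0" and X: "X \<in> BA A"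
  shows "0 \<le> opnorm_A A X"
proof -
  have "0 < norm_A A (A u)" using norm_A_pos_on_range_closure[OF A in_hclosure[OF rangeI] u] .
  moreover have "0 \<le> opnorm_A A X * norm_A A (A u)"
    using norm_A_le_opnorm_A[OF A X, of "A u"] norm_A_nonneg[OF A, of "X (A u)"] by linarith
  ultimately show ?thesis by (simp add: zero_le_mult_iff)
qed

lemma A_selfadjoint_null:
  assumes A: "positive_op A" and R: "A_selfadjoint A R" and x: "norm_A A x = 0"
  shows "norm_A A (R x) = 0"
proof -
  have "(norm_A A (R x))\<^sup>2 = Re (inner_A A (R x) (R x))" unfolding inner_A_def by (rule power2_norm_A[OF A])
  also have "\<dots> = Re (inner_A A x (R (R x)))" using R unfolding A_selfadjoint_def by simp
  also have "\<dots> \<le> norm_A A x * norm_A A (R (R x))"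
    using complex_Re_le_cmod inner_A_Cauchy_Schwarz[OF A] by (rule order_trans)
  finally show ?thesis using x by simp
qed

lemma cmod_inner_A_polarization_le:
  assumes A: "positive_op A" and R: "bounded_op R"
    and bound: "\<And>z. cmod (inner_A A (R z) z) \<le> w * (norm_A A z)\<^sup>2"
  shows "2 * cmod (inner_A A (R x) y + inner_A A (R y) x) \<le> w * (2 * (norm_A A x)\<^sup>2 + 2 * (norm_A A y)\<^sup>2)"
proof -
  have "2 * (inner_A A (R x) y + inner_A A (R y) x)
      = inner_A A (R (x + y)) (x + y) - inner_A A (R (x - y)) (x - y)"
    by (simp add: bounded_op_add[OF R] bounded_op_diff[OF R] inner_A_left_simps[OF A]
        inner_A_right_simps algebra_simps)
  then have "2 * cmod (inner_A A (R x) y + inner_A A (R y) x)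
      \<le> cmod (inner_A A (R (x + y)) (x + y)) + cmod (inner_A A (R (x - y)) (x - y))"
    by (metis norm_mult norm_numeral norm_triangle_ineq4)
  also have "\<dots> \<le> w * ((norm_A A (x + y))\<^sup>2 + (norm_A A (x - y))\<^sup>2)"
    using bound[of "x + y"] bound[of "x - y"] by (simp add: distrib_left)
  also have "\<dots> = w * (2 * (norm_A A x)\<^sup>2 + 2 * (norm_A A y)\<^sup>2)"
    by (simp add: norm_A_parallelogram[OF A])
  finally show ?thesis .
qed

text \<open>For \<open>y = (\<parallel>x\<parallel>\<^sub>A / \<parallel>R x\<parallel>\<^sub>A) R x\<close>, A-selfadjointness gives
  \<open>\<langle>R x, y\<rangle>\<^sub>A = \<langle>R y, x\<rangle>\<^sub>A = \<parallel>x\<parallel>\<^sub>A \<parallel>R x\<parallel>\<^sub>A\<close>, so the polarization estimate bounds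
  \<open>\<parallel>R x\<parallel>\<^sub>A\<close> by \<open>w \<parallel>x\<parallel>\<^sub>A\<close>.\<close>
lemma A_selfadjoint_norm_A_le_numerical_bound:
  assumes A: "positive_op A" and R: "A_selfadjoint A R"
    and bound: "\<And>z. cmod (inner_A A (R z) z) \<le> w * (norm_A A z)\<^sup>2"
  shows "norm_A A (R x) \<le> w * norm_A A x"
proof -
  have Rb: "bounded_op R" and sym: "\<And>u v. inner_A A (R u) v = inner_A A u (R v)"
    using R unfolding A_selfadjoint_def by auto
  define a where "a = norm_A A x"
  define r where "r = norm_A A (R x)"
  have a0: "0 \<le> a" and r0: "0 \<le> r" unfolding a_def r_def using A by simp_all
  show ?thesis
  proof (cases "a = 0")
    case True
    then show ?thesis using A_selfadjoint_null[OF A R] unfolding a_def by simp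
  next
    case False
    then have ap: "a > 0" using a0 by simp
    have "0 \<le> w * a\<^sup>2" using bound[of x] a_def by (meson norm_ge_zero order_trans)
    then have w0: "w \<ge> 0" using ap by (simp add: zero_le_mult_iff)
    show ?thesis
    proof (cases "r = 0")
      case True
      then show ?thesis using w0 ap unfolding r_def a_def by simp
    next
      case False
      then have rp: "r > 0" using r0 by simp
      define y where "y = hscale (of_real (a / r)) (R x)"
      have xy: "inner_A A (R x) y = of_real (a * r)"
        unfolding y_def using rp by (simp add: inner_A_hscale_right inner_A_self[OF A] r_def power2_eq_square)
      have yx: "inner_A A (R y) x = of_real (a * r)"
        using xy sym[of y x] inner_A_commute[OF A, of y "R x"] by simp
      have ny: "norm_A A y = a"
        unfolding y_def using rp ap by (simp add: norm_A_hscale[OF A] r_def[symmetric] norm_divide)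
      have "4 * a * r = 2 * cmod (inner_A A (R x) y + inner_A A (R y) x)"
        unfolding xy yx using ap rp by (simp add: norm_mult)
      also have "\<dots> \<le> 4 * a * (w * a)"
        using cmod_inner_A_polarization_le[OF A Rb bound, of x y] ny a_def by (simp add: power2_eq_square)
      finally show ?thesis using ap unfolding r_def a_def by simp
    qed
  qed
qed

section \<open>The A-real and A-imaginary parts\<close>

lemma
  assumes A: "positive_op A" and S: "S \<in> BA A"
  shows A_selfadjoint_ReA: "A_selfadjoint A (ReA A S)"
    and A_selfadjoint_ImA: "A_selfadjoint A (ImA A S)"
proof -
  have adj: "inner_A A (S x) y = inner_A A x (sharpA A S y)" "inner_A A (sharpA A S x) y = inner_A A x (S y)"
    for x y using inner_A_sharpA_right[OF A S] inner_A_sharpA_left[OF A S] by blast+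
  have bounded: "bounded_op S" "bounded_op (sharpA A S)"
    using BA_bounded[OF S] bounded_op_sharpA[OF A S] .
  show "A_selfadjoint A (ReA A S)"
    unfolding A_selfadjoint_def ReA_def
    by (simp add: bounded_op_hscale_op bounded_op_add_op bounded inner_A_left_simps[OF A]
        inner_A_right_simps adj algebra_simps)
  show "A_selfadjoint A (ImA A S)"
    unfolding A_selfadjoint_def ImA_def
    by (simp add: bounded_op_hscale_op bounded_op_diff_op bounded inner_A_left_simps[OF A]
        inner_A_right_simps adj algebra_simps)
qed

lemma
  assumes A: "positive_op A" and S: "S \<in> BA A"
  shows inner_A_ReA_self: "inner_A A (ReA A S z) z = of_real (Re (inner_A A (S z) z))"
    and inner_A_ImA_self: "inner_A A (ImA A S z) z = of_real (Im (inner_A A (S z) z))"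
proof -
  have sharp: "inner_A A (sharpA A S z) z = cnj (inner_A A (S z) z)"
    by (simp add: inner_A_sharpA_left[OF A S] inner_A_commute[OF A, where x = "S z" and y = z])
  show "inner_A A (ReA A S z) z = of_real (Re (inner_A A (S z) z))"
    unfolding ReA_def by (simp add: inner_A_left_simps[OF A] sharp complex_add_cnj)
  show "inner_A A (ImA A S z) z = of_real (Im (inner_A A (S z) z))"
    unfolding ImA_def by (simp add: inner_A_left_simps[OF A] sharp complex_diff_cnj field_simps)
qed

lemma ReA_ReA_add_ImA_ImA:
  assumes A: "positive_op A" and S: "S \<in> BA A"
  shows "ReA A S (ReA A S x) + ImA A S (ImA A S x) = hscale (1/2) (S (sharpA A S x) + sharpA A S (S x))"
proof -
  have Sb: "bounded_op S" and Ssb: "bounded_op (sharpA A S)"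
    using BA_bounded[OF S] bounded_op_sharpA[OF A S] .
  show ?thesis unfolding ReA_def ImA_def
    by (rule hinner_ext) (simp add: bounded_op_add[OF Sb] bounded_op_add[OF Ssb] bounded_op_diff[OF Sb]
        bounded_op_diff[OF Ssb] bounded_op_hscale[OF Sb] bounded_op_hscale[OF Ssb] hinner_simps field_simps)
qed

lemma
  assumes A: "positive_op A" and u: "A u \<noteq> 0" and S: "S \<in> BA A"
    and numerical: "\<And>z. cmod (inner_A A (S z) z) \<le> w * (norm_A A z)\<^sup>2"
  shows opnorm_A_ReA_le: "opnorm_A A (ReA A S) \<le> w"
    and opnorm_A_ImA_le: "opnorm_A A (ImA A S) \<le> w"
proof -
  have "cmod (inner_A A (ReA A S z) z) \<le> w * (norm_A A z)\<^sup>2" for z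
    using numerical[of z] abs_Re_le_cmod[of "inner_A A (S z) z"] by (simp add: inner_A_ReA_self[OF A S])
  then have "norm_A A (ReA A S x) \<le> w * norm_A A x" for x
    by (rule A_selfadjoint_norm_A_le_numerical_bound[OF A A_selfadjoint_ReA[OF A S]])
  then show "opnorm_A A (ReA A S) \<le> w" by (rule opnorm_A_le[OF A u])
  have "cmod (inner_A A (ImA A S z) z) \<le> w * (norm_A A z)\<^sup>2" for z
    using numerical[of z] abs_Im_le_cmod[of "inner_A A (S z) z"] by (simp add: inner_A_ImA_self[OF A S])
  then have "norm_A A (ImA A S x) \<le> w * norm_A A x" for x
    by (rule A_selfadjoint_norm_A_le_numerical_bound[OF A A_selfadjoint_ImA[OF A S]])
  then show "opnorm_A A (ImA A S) \<le> w" by (rule opnorm_A_le[OF A u])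
qed

lemma opnorm_A_sharpA_anticomm_le:
  assumes A: "positive_op A" and u: "A u \<noteq> 0" and S: "S \<in> BA A"
  shows "opnorm_A A (\<lambda>x. sharpA A S (S x) + S (sharpA A S x))
    \<le> 2 * ((opnorm_A A (ReA A S))\<^sup>2 + (opnorm_A A (ImA A S))\<^sup>2)"
proof (rule opnorm_A_le[OF A u])
  fix x
  define R I where "R = ReA A S" and "I = ImA A S"
  define \<rho> \<iota> where "\<rho> = opnorm_A A R" and "\<iota> = opnorm_A A I"
  have R: "R \<in> BA A" and I: "I \<in> BA A"
    unfolding R_def I_def using A_selfadjoint_ReA[OF A S] A_selfadjoint_ImA[OF A S] by (simp_all add: A_selfadjoint_in_BA)
  have \<rho>0: "0 \<le> \<rho>" and \<iota>0: "0 \<le> \<iota>" unfolding \<rho>_def \<iota>_def using opnorm_A_nonneg[OF A u] R I by auto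
  have "sharpA A S (S x) + S (sharpA A S x) = hscale 2 (R (R x) + I (I x))"
    unfolding R_def I_def ReA_ReA_add_ImA_ImA[OF A S] by (simp add: hscale_hscale hscale_one add.commute)
  then have "norm_A A (sharpA A S (S x) + S (sharpA A S x)) = 2 * norm_A A (R (R x) + I (I x))"
    by (simp add: norm_A_hscale[OF A])
  also have "\<dots> \<le> 2 * (\<rho> * norm_A A (R x) + \<iota> * norm_A A (I x))"
    using norm_A_triangle[OF A, of "R (R x)" "I (I x)"] norm_A_le_opnorm_A[OF A R, of "R x"]
      norm_A_le_opnorm_A[OF A I, of "I x"] unfolding \<rho>_def \<iota>_def by simp
  also have "\<dots> \<le> 2 * (\<rho> * (\<rho> * norm_A A x) + \<iota> * (\<iota> * norm_A A x))"
    using norm_A_le_opnorm_A[OF A R, of x] norm_A_le_opnorm_A[OF A I, of x] \<rho>0 \<iota>0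
    unfolding \<rho>_def \<iota>_def by (simp add: add_mono mult_left_mono)
  finally show "norm_A A (sharpA A S (S x) + S (sharpA A S x)) \<le> 2 * (\<rho>\<^sup>2 + \<iota>\<^sup>2) * norm_A A x"
    by (simp add: power2_eq_square algebra_simps)
qed

section \<open>The A-q-numerical radius\<close>

lemma norm_A_eq_1_iff:
  assumes A: "positive_op A"
  shows "norm_A A y = 1 \<longleftrightarrow> inner_A A y y = 1"
proof -
  have "inner_A A y y = 1 \<longleftrightarrow> (norm_A A y)\<^sup>2 = 1" by (simp only: inner_A_self[OF A] of_real_eq_1_iff)
  also have "\<dots> \<longleftrightarrow> norm_A A y = 1" using norm_A_nonneg[OF A, of y] by (auto simp: power2_eq_1_iff)
  finally show ?thesis by simp
qed

lemma A_unit_orthogonal_of_component: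
  assumes A: "positive_op A" and xx: "inner_A A x x = 1"
    and w: "norm_A A (w - hscale (inner_A A w x) x) \<noteq> 0"
  shows "\<exists>z. norm_A A z = 1 \<and> inner_A A x z = 0"
proof -
  define g where "g = w - hscale (inner_A A w x) x"
  define n where "n = norm_A A g"
  have n: "n > 0" using w norm_A_nonneg[OF A, of g] unfolding n_def g_def by linarith
  define z where "z = hscale (of_real (1 / n)) g"
  have "norm_A A z = 1" unfolding z_def using n by (simp add: norm_A_hscale[OF A] n_def[symmetric] norm_divide)
  moreover have "inner_A A g x = 0" unfolding g_def by (simp add: inner_A_left_simps[OF A] xx)
  then have "inner_A A x z = 0"
    unfolding z_def using inner_A_commute[OF A, where x = g and y = x] by (simp add: inner_A_hscale_right)
  ultimately show ?thesis by blast
qed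

text \<open>Gram--Schmidt against \<open>x\<close> fails only if both vectors spanning a plane in \<open>R(A)\<close> are
  A-dependent on \<open>x\<close>, which forces a nontrivial combination of them into the A-null space.\<close>
lemma exists_A_unit_orthogonal:
  assumes A: "positive_op A" and dim: "range_dim_ge_2 A" and x: "norm_A A x = 1"
  shows "\<exists>z. norm_A A z = 1 \<and> inner_A A x z = 0"
proof -
  have b: "bounded_op A" using positive_op_bounded[OF A] .
  have xx: "inner_A A x x = 1" using x norm_A_eq_1_iff[OF A] by simp
  obtain u v where uv: "u \<in> range A" "v \<in> range A"
    and indep: "\<And>a b. hscale a u + hscale b v = 0 \<Longrightarrow> a = 0 \<and> b = 0"
    using dim unfolding range_dim_ge_2_def by blast
  define g where "g w = w - hscale (inner_A A w x) x" for w
  have orth: "\<exists>z. norm_A A z = 1 \<and> inner_A A x z = 0" if "norm_A A (g w) \<noteq> 0" for w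
    using A_unit_orthogonal_of_component[OF A xx] that unfolding g_def .
  show ?thesis
  proof (rule ccontr)
    assume "\<not> ?thesis"
    then have "A (g u) = 0" "A (g v) = 0" using orth[of u] orth[of v] null_of_norm_A[OF A] by blast+
    then have Au: "A u = hscale (inner_A A u x) (A x)" and Av: "A v = hscale (inner_A A v x) (A x)"
      unfolding g_def by (simp_all add: bounded_op_diff[OF b] bounded_op_hscale[OF b])
    define c where "c = hscale (inner_A A v x) u + hscale (- inner_A A u x) v"
    have "A c = 0" unfolding c_def
      by (simp add: bounded_op_add[OF b] bounded_op_diff[OF b] bounded_op_hscale[OF b] Au Av hscale_hscale
          hscale_minus_left mult.commute)
    moreover have "c \<in> hclosure (range A)"
      using uv closed_hsubspace_add[OF closed_hsubspace_range[OF b]] closed_hsubspace_hscale[OF closed_hsubspace_range[OF b]]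
      unfolding c_def by (meson in_hclosure)
    ultimately have "c = 0" by (rule range_closure_null_eq_zero[OF A, rotated])
    then have "inner_A A u x = 0" using indep[of "inner_A A v x" "- inner_A A u x"] unfolding c_def by simp
    then have "A u = 0" using Au by simp
    then have "u = 0" using range_closure_null_eq_zero[OF A in_hclosure[OF uv(1)]] by simp
    then show False using indep[of 1 0] by simp
  qed
qed

lemma cmod_inner_A_le_wqA:
  assumes A: "positive_op A" and T: "T \<in> BA A"
    and xy: "norm_A A x = 1" "norm_A A y = 1" "inner_A A x y = q"
  shows "cmod (inner_A A (T x) y) \<le> wqA q A T"
  unfolding wqA_def
proof (rule cSup_upper)
  obtain c where c: "\<And>x. norm_A A (T x) \<le> c * norm_A A x" using BA_norm_A_bound[OF A T] by blast
  show "bdd_above {cmod (inner_A A (T x) y) |x y. norm_A A x = 1 \<and> norm_A A y = 1 \<and> inner_A A x y = q}"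
  proof (rule bdd_aboveI)
    fix d assume "d \<in> {cmod (inner_A A (T x) y) |x y. norm_A A x = 1 \<and> norm_A A y = 1 \<and> inner_A A x y = q}"
    then obtain x y where "d = cmod (inner_A A (T x) y)" "norm_A A x = 1" "norm_A A y = 1" by blast
    then show "d \<le> c" using inner_A_Cauchy_Schwarz[OF A, of "T x" y] c[of x] by simp
  qed
qed (use xy in blast)

text \<open>For an A-unit vector \<open>x\<close> choose \<open>y = conj(q) x \<plusminus> sqrt(1 - |q|\<^sup>2) z\<close> with \<open>z\<close> A-orthonormal
  to \<open>x\<close>; both choices are admissible in \<open>w\<^sub>q\<^sub>,\<^sub>A(T)\<close>, and averaging them isolates
  \<open>q \<langle>T x, x\<rangle>\<^sub>A\<close>.\<close>
lemma wqA_ge_unit: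
  assumes A: "positive_op A" and dim: "range_dim_ge_2 A" and T: "T \<in> BA A"
    and q: "cmod q \<le> 1" and x: "norm_A A x = 1"
  shows "cmod q * cmod (inner_A A (T x) x) \<le> wqA q A T"
proof -
  obtain z where z: "norm_A A z = 1" "inner_A A x z = 0" using exists_A_unit_orthogonal[OF A dim x] by blast
  have xx: "inner_A A x x = 1" and zz: "inner_A A z z = 1" using x z(1) norm_A_eq_1_iff[OF A] by simp_all
  have zx: "inner_A A z x = 0" using inner_A_commute[OF A, where x = x and y = z] z(2) by simp
  define s where "s = sqrt (1 - (cmod q)\<^sup>2)"
  have s2: "s\<^sup>2 = 1 - (cmod q)\<^sup>2" unfolding s_def using q by (simp add: power_le_one)
  have le: "cmod (q * inner_A A (T x) x + of_real t * inner_A A (T x) z) \<le> wqA q A T" if t: "t\<^sup>2 = s\<^sup>2" for t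
  proof -
    define y where "y = hscale (cnj q) x + hscale (of_real t) z"
    have "inner_A A x y = q" unfolding y_def by (simp add: inner_A_right_simps xx z(2))
    moreover have "inner_A A y y = of_real ((cmod q)\<^sup>2 + t\<^sup>2)"
      unfolding y_def by (simp add: inner_A_left_simps[OF A] inner_A_right_simps xx zz z(2) zx
          complex_norm_square[symmetric] power2_eq_square algebra_simps)
    then have "norm_A A y = 1" using t s2 norm_A_eq_1_iff[OF A] by simp
    ultimately have "cmod (inner_A A (T x) y) \<le> wqA q A T" by (rule cmod_inner_A_le_wqA[OF A T x, rotated])
    moreover have "inner_A A (T x) y = q * inner_A A (T x) x + of_real t * inner_A A (T x) z"
      unfolding y_def by (simp add: inner_A_right_simps)
    ultimately show ?thesis by simp
  qed
  define P where "P = q * inner_A A (T x) x"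
  define Q where "Q = of_real s * inner_A A (T x) z"
  have "2 * cmod P = cmod ((P + Q) + (P - Q))" by (simp add: norm_mult[symmetric])
  also have "\<dots> \<le> cmod (P + Q) + cmod (P - Q)" by (rule norm_triangle_ineq)
  also have "\<dots> \<le> 2 * wqA q A T" using le[of s] le[of "- s"] unfolding P_def Q_def by simp
  finally show ?thesis unfolding P_def by (simp add: norm_mult)
qed

lemma wqA_numerical_range_bound:
  assumes A: "positive_op A" and dim: "range_dim_ge_2 A" and T: "T \<in> BA A" and q: "cmod q \<le> 1"
  shows "cmod q * cmod (inner_A A (T x) x) \<le> wqA q A T * (norm_A A x)\<^sup>2"
proof (cases "norm_A A x = 0")
  case True
  then show ?thesis using inner_A_Cauchy_Schwarz[OF A, of "T x" x] by simp
next
  case False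
  define n where "n = norm_A A x"
  have n: "n > 0" using False norm_A_nonneg[OF A, of x] n_def by linarith
  define x' where "x' = hscale (of_real (1 / n)) x"
  have "norm_A A x' = 1" unfolding x'_def using n by (simp add: norm_A_hscale[OF A] n_def[symmetric] norm_divide)
  then have "cmod q * cmod (inner_A A (T x') x') \<le> wqA q A T" by (rule wqA_ge_unit[OF A dim T q])
  moreover have "inner_A A (T x') x' = inner_A A (T x) x / of_real (n\<^sup>2)"
    unfolding x'_def by (simp add: bounded_op_hscale[OF BA_bounded[OF T]] inner_A_left_simps[OF A]
        inner_A_right_simps power2_eq_square)
  ultimately show ?thesis using n unfolding n_def[symmetric] by (simp add: norm_divide norm_power field_simps)
qed

lemma range_dim_ge_2_nonzero:
  assumes "range_dim_ge_2 A"
  obtains u where "A u \<noteq> 0"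
proof -
  obtain v where "v \<in> range A" "\<And>a. hscale a v = 0 \<Longrightarrow> a = 0"
    using assms unfolding range_dim_ge_2_def by (metis add_0_right hscale_zero_left)
  then show ?thesis using that hscale_one[of v] by fastforce
qed

lemma sharpA_anticomm_hscale_unimodular:
  assumes A: "positive_op A" and T: "T \<in> BA A" and c: "cmod c = 1"
  shows "(\<lambda>x. sharpA A (\<lambda>x. hscale c (T x)) (hscale c (T x)) + hscale c (T (sharpA A (\<lambda>x. hscale c (T x)) x)))
    = (\<lambda>x. sharpA A T (T x) + T (sharpA A T x))"
proof -
  have "cnj c * c = 1" using c by (simp add: complex_norm_square[symmetric] mult.commute)
  then show ?thesis unfolding sharpA_hscale[OF A T]
    by (simp add: bounded_op_hscale[OF BA_bounded[OF T]] bounded_op_hscale[OF bounded_op_sharpA[OF A T]]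
        hscale_hscale mult.commute[of c] hscale_one)
qed

text \<open>A squeeze: both norms are at most \<open>w\<close>, while the sum of their squares is at least
  \<open>\<parallel>S\<^sup>\<sharp>S + SS\<^sup>\<sharp>\<parallel>\<^sub>A / 2 = 2 w\<^sup>2\<close>.\<close>
lemma power2_opnorm_A_ReA_ImA_eq:
  assumes A: "positive_op A" and u: "A u \<noteq> 0" and S: "S \<in> BA A"
    and numerical: "\<And>z. cmod (inner_A A (S z) z) \<le> w * (norm_A A z)\<^sup>2"
    and extremal: "4 * w\<^sup>2 = opnorm_A A (\<lambda>x. sharpA A S (S x) + S (sharpA A S x))"
  shows "(opnorm_A A (ReA A S))\<^sup>2 = w\<^sup>2" and "(opnorm_A A (ImA A S))\<^sup>2 = w\<^sup>2"
proof -
  define \<rho> \<iota> where "\<rho> = opnorm_A A (ReA A S)" and "\<iota> = opnorm_A A (ImA A S)"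
  have "\<rho> \<le> w" "\<iota> \<le> w"
    unfolding \<rho>_def \<iota>_def using opnorm_A_ReA_le[OF A u S numerical] opnorm_A_ImA_le[OF A u S numerical] .
  moreover have "0 \<le> \<rho>" "0 \<le> \<iota>" unfolding \<rho>_def \<iota>_def
    using opnorm_A_nonneg[OF A u] A_selfadjoint_in_BA A_selfadjoint_ReA[OF A S] A_selfadjoint_ImA[OF A S] by auto
  ultimately have "\<rho>\<^sup>2 \<le> w\<^sup>2" "\<iota>\<^sup>2 \<le> w\<^sup>2" by (simp_all add: power_mono)
  moreover have "4 * w\<^sup>2 \<le> 2 * (\<rho>\<^sup>2 + \<iota>\<^sup>2)"
    unfolding extremal \<rho>_def \<iota>_def by (rule opnorm_A_sharpA_anticomm_le[OF A u S])
  ultimately show "(opnorm_A A (ReA A S))\<^sup>2 = w\<^sup>2" "(opnorm_A A (ImA A S))\<^sup>2 = w\<^sup>2"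
    unfolding \<rho>_def[symmetric] \<iota>_def[symmetric] by (simp_all add: field_simps)
qed

lemma power2_opnorm_A_ReA_ImA_unimodular:
  assumes A: "positive_op A" and dim: "range_dim_ge_2 A" and T: "T \<in> BA A" and q: "cmod q \<le> 1"
    and extremal: "(wqA q A T)\<^sup>2 = (cmod q)\<^sup>2 / 4 * opnorm_A A (\<lambda>x. sharpA A T (T x) + T (sharpA A T x))"
    and c: "cmod c = 1"
  shows "(cmod q)\<^sup>2 * (opnorm_A A (ReA A (\<lambda>x. hscale c (T x))))\<^sup>2
      = (cmod q)\<^sup>2 / 4 * opnorm_A A (\<lambda>x. sharpA A T (T x) + T (sharpA A T x))
    \<and> (cmod q)\<^sup>2 * (opnorm_A A (ImA A (\<lambda>x. hscale c (T x))))\<^sup>2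
      = (cmod q)\<^sup>2 / 4 * opnorm_A A (\<lambda>x. sharpA A T (T x) + T (sharpA A T x))"
proof (cases "q = 0")
  case False
  define S where "S = (\<lambda>x. hscale c (T x))"
  define w where "w = wqA q A T / cmod q"
  obtain u where u: "A u \<noteq> 0" using range_dim_ge_2_nonzero[OF dim] .
  have S: "S \<in> BA A" unfolding S_def by (rule BA_hscale[OF A T])
  have "cmod (inner_A A (S z) z) \<le> w * (norm_A A z)\<^sup>2" for z
    using wqA_numerical_range_bound[OF A dim T q, of z] False c unfolding w_def S_def
    by (simp add: inner_A_hscale_left[OF A] norm_mult field_simps)
  moreover have "4 * w\<^sup>2 = opnorm_A A (\<lambda>x. sharpA A S (S x) + S (sharpA A S x))"
    using extremal False unfolding w_def S_def sharpA_anticomm_hscale_unimodular[OF A T c]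
    by (simp add: power_divide field_simps)
  ultimately have "(opnorm_A A (ReA A S))\<^sup>2 = w\<^sup>2" "(opnorm_A A (ImA A S))\<^sup>2 = w\<^sup>2"
    by (rule power2_opnorm_A_ReA_ImA_eq[OF A u S])+
  then show ?thesis using extremal False unfolding w_def S_def by (simp add: power_divide)
qed simp

theorem mainTheorem2:
  fixes A T :: "'a::complex_hilbert \<Rightarrow> 'a" and q :: complex
  assumes "positive_op A"
    and "range_dim_ge_2 A"
    and "T \<in> BA A"
    and "cmod q \<le> 1"
    and "(wqA q A T)\<^sup>2 = (cmod q)\<^sup>2 / 4 * opnorm_A A (\<lambda>x. sharpA A T (T x) + T (sharpA A T x))"
  shows "\<forall>\<theta>::real.
    (cmod q)\<^sup>2 * (opnorm_A A (ReA A (\<lambda>x. hscale (exp (\<i> * of_real \<theta>)) (T x))))\<^sup>2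
      = (cmod q)\<^sup>2 * (opnorm_A A (ImA A (\<lambda>x. hscale (exp (\<i> * of_real \<theta>)) (T x))))\<^sup>2
    \<and> (cmod q)\<^sup>2 * (opnorm_A A (ImA A (\<lambda>x. hscale (exp (\<i> * of_real \<theta>)) (T x))))\<^sup>2
      = (cmod q)\<^sup>2 / 4 * opnorm_A A (\<lambda>x. sharpA A T (T x) + T (sharpA A T x))"
  using power2_opnorm_A_ReA_ImA_unimodular[OF assms norm_exp_i_times] by (intro allI) metis

end
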